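(* Let $P\ge1$, $\mathbf{R}\in\mathbb{N}_0^P$, $\mathbf{d}=(d_1,\dots,d_P)\in H_0^P$, and $w_p=a_p/b_p$ ($1\le p\le P$) with $a_p,b_p$ coprime positive integers. Let $w=\operatorname{lcm}(a_1,\dots,a_P)/\gcd(b_1,\dots,b_P)$ and $\beta_p=w/w_p$ (a positive integer). Then, as meromorphic functions of $s$, \[ \zeta^B(\mathbf{R},s,\mathbf{d}|\mathbf{w})=w^{-s}\prod_{p=1}^P\beta_p^{R_p}\sum_{\substack{0\le k_p\le\beta_p-1\\ p=1,\dots,P}}\zeta^B\Big(\mathbf{R},s,\Big(\frac{d_p+k_p}{\beta_p}\Big)_{p\in[\![1,P]\!]}\,\Big|\,(1,\dots,1)\Big). \]
   Context: $H_0=\{\operatorname{Re}s>0\}$, $\mathbb{N}_0=\{0,1,\dots\}$, principal branch of powers. For $\mathbf{R}\in\mathbb{N}_0^P$, $\mathbf{c},\mathbf{d}\in H_0^P$, the generalized Barnes zeta function is $\zeta^B(\mathbf{R},s,\mathbf{d}|\mathbf{c})=\sum_{\mathbf{n}\in\mathbb{N}_0^P}\prod_p(n_p+d_p)^{R_p}\big(\sum_pc_p(n_p+d_p)\big)^{-s}$ (absolutely convergent for $\operatorname{Re}s$ large), meromorphically continued to $\mathbb{C}$. *)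

theory Defs
  imports "HOL-Complex_Analysis.Complex_Analysis"
begin

text \<open>Vectors in C^P / N_0^P are represented as functions on nat, only the
  components with index p < P (0-based) being relevant.  The index set
  N_0^P of the Barnes series is PiE {..<P} (\<lambda>_. UNIV).\<close>

definition barnes_series ::
  "nat \<Rightarrow> (nat \<Rightarrow> nat) \<Rightarrow> complex \<Rightarrow> (nat \<Rightarrow> complex) \<Rightarrow> (nat \<Rightarrow> complex) \<Rightarrow> complex" where
  "barnes_series P R s d c =
     (\<Sum>\<^sub>\<infinity>n \<in> PiE {..<P} (\<lambda>_. UNIV).
        (\<Prod>p<P. (of_nat (n p) + d p) ^ R p) *
        (\<Sum>p<P. c p * (of_nat (n p) + d p)) powr (- s))"

definition is_barnes_continuation ::
  "nat \<Rightarrow> (nat \<Rightarrow> nat) \<Rightarrow> (nat \<Rightarrow> complex) \<Rightarrow> (nat \<Rightarrow> complex) \<Rightarrow> (complex \<Rightarrow> complex) \<Rightarrow> bool" where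
  "is_barnes_continuation P R d c f \<longleftrightarrow>
     f meromorphic_on UNIV \<and>
     (\<exists>\<sigma>::real. \<forall>s. Re s > \<sigma> \<longrightarrow> f s = barnes_series P R s d c)"

text \<open>The generalized Barnes zeta function (its meromorphic continuation;
  unique up to values on a sparse set, i.e. as a meromorphic function).\<close>

definition barnes_zeta ::
  "nat \<Rightarrow> (nat \<Rightarrow> nat) \<Rightarrow> complex \<Rightarrow> (nat \<Rightarrow> complex) \<Rightarrow> (nat \<Rightarrow> complex) \<Rightarrow> complex" where
  "barnes_zeta P R s d c = (SOME f. is_barnes_continuation P R d c f) s"

end

theory Submission
  imports Defs
begin

text \<open>Write \<open>n_p = \<beta>_p m_p + k_p\<close> with \<open>0 \<le> k_p < \<beta>_p\<close>. Since
  \<open>w_p (n_p + d_p) = w (m_p + (d_p + k_p) / \<beta>_p)\<close>, the Barnes series with weights \<open>w_p\<close>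
  splits into finitely many Barnes series with unit weights; this proves the identity on a right
  half-plane, and uniqueness of meromorphic continuation extends it. As the Barnes zeta function
  is defined by choice, this also needs the unit-weight series to have a meromorphic continuation.
  Grouping that series by \<open>N = \<Sum>m_p\<close> gives \<open>\<Sum>_N Q(N) (N + D)^(-s)\<close> with \<open>Q\<close> a polynomial
  and \<open>D = \<Sum>d_p\<close>, a finite combination of Hurwitz series \<open>\<zeta>(s - j, D)\<close>. The Hurwitz series
  in turn is continued through the binomial identity
  \<open>(1 - s) \<zeta>(s, a) = - a^(1 - s) - \<Sum>_(j \<ge> 1) ((1 - s) choose (j + 1)) \<zeta>(s + j, a)\<close>,
  which extends \<open>(1 - s) \<zeta>(s, a)\<close> to an entire function one vertical strip at a time.\<close>

section \<open>The Hurwitz series\<close>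

definition arg_factor :: "complex \<Rightarrow> real" where
  "arg_factor s = exp (pi / 2 * \<bar>Im s\<bar>)"

lemma arg_factor_pos: "arg_factor s > 0"
  by (simp add: arg_factor_def)

lemma arg_factor_add_of_nat [simp]: "arg_factor (s + of_nat j) = arg_factor s"
  by (simp add: arg_factor_def)

lemma norm_powr_le_arg_factor:
  fixes x s :: complex
  assumes "Re x > 0"
  shows "norm (x powr (-s)) \<le> norm x powr (- Re s) * arg_factor s"
proof -
  have x0: "x \<noteq> 0" using assms by auto
  have A: "\<bar>Arg x\<bar> < pi/2" using Re_Ln_pos_lt_imp[OF assms] Arg_eq_Im_Ln[OF x0] by simp
  have "Im s * Arg x \<le> \<bar>Im s\<bar> * \<bar>Arg x\<bar>" by (metis abs_ge_self abs_mult)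
  also have "\<dots> \<le> \<bar>Im s\<bar> * (pi/2)" using A by (intro mult_left_mono) auto
  finally have "exp (Im s * Arg x) \<le> arg_factor s" unfolding arg_factor_def by (simp add: mult.commute)
  moreover have "norm (x powr (-s)) = norm x powr (- Re s) * exp (Im s * Arg x)"
    by (simp add: norm_powr_complex)
  ultimately show ?thesis by (simp add: mult_left_mono)
qed

lemma norm_shifted_powr_le:
  fixes a s :: complex
  assumes "Re a \<ge> 8" "Re s \<ge> 0"
  shows "norm ((of_nat n + a) powr (-s)) \<le> (real n + 8) powr (- Re s) * arg_factor s"
proof -
  have "Re (of_nat n + a) > 0" using assms by simp
  hence "norm ((of_nat n + a) powr (-s)) \<le> norm (of_nat n + a) powr (- Re s) * arg_factor s"
    by (rule norm_powr_le_arg_factor)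
  also have "norm (of_nat n + a) powr (- Re s) \<le> (real n + 8) powr (- Re s)"
  proof (rule powr_mono2')
    have "real n + 8 \<le> Re (of_nat n + a)" using assms by simp
    also have "\<dots> \<le> norm (of_nat n + a)" by (rule complex_Re_le_cmod)
    finally show "real n + 8 \<le> norm (of_nat n + a)" .
  qed (use assms in auto)
  finally show ?thesis using arg_factor_pos[of s] by (simp add: mult_right_mono)
qed

lemma norm_shifted_powr_le_square:
  fixes a s :: complex
  assumes "Re a \<ge> 8" "Re s \<ge> 2"
  shows "norm ((of_nat n + a) powr (-s)) \<le> 8 powr (- Re s) * (64 / (real n + 8)^2) * arg_factor s"
proof -
  have "(real n + 8) powr (- Re s) = 8 powr (- Re s) * ((real n + 8) / 8) powr (- Re s)"
    by (simp add: powr_divide)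
  also have "((real n + 8) / 8) powr (- Re s) \<le> ((real n + 8) / 8) powr (- 2)"
    by (rule powr_mono) (use assms in auto)
  also have "((real n + 8) / 8) powr (- 2) = 64 / (real n + 8)^2"
    by (simp add: powr_minus powr_divide power2_eq_square divide_simps)
  finally have "(real n + 8) powr (- Re s) \<le> 8 powr (- Re s) * (64 / (real n + 8)^2)"
    by (simp add: mult_left_mono)
  with norm_shifted_powr_le[OF assms(1), of s n] assms arg_factor_pos[of s] show ?thesis
    by (smt (verit) mult_right_mono)
qed

lemma summable_shifted_inverse_square: "summable (\<lambda>n. 64 / (real n + 8)^2)"
proof -
  have "summable (\<lambda>n. inverse (real n ^ 2))" by (rule inverse_power_summable) auto
  hence "summable (\<lambda>n. inverse (real (n + 8) ^ 2))" by (subst summable_iff_shift)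
  hence "summable (\<lambda>n. 64 * inverse (real (n + 8) ^ 2))" by (rule summable_mult)
  thus ?thesis by (simp add: divide_inverse add.commute)
qed

definition hurwitz_series :: "complex \<Rightarrow> complex \<Rightarrow> complex" where
  "hurwitz_series a s = (\<Sum>n. (of_nat n + a) powr (-s))"

lemma summable_norm_hurwitz_terms:
  fixes a s :: complex
  assumes "Re a \<ge> 8" "Re s \<ge> 2"
  shows "summable (\<lambda>n. norm ((of_nat n + a) powr (-s)))"
  by (rule summable_comparison_test'[OF summable_mult2[OF summable_mult[OF
        summable_shifted_inverse_square, of "8 powr (- Re s)"], of "arg_factor s"]])
     (use norm_shifted_powr_le_square[OF assms] in \<open>auto simp: mult_ac\<close>)

lemma hurwitz_series_sums:
  fixes a s :: complex
  assumes "Re a \<ge> 8" "Re s \<ge> 2"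
  shows "(\<lambda>n. (of_nat n + a) powr (-s)) sums hurwitz_series a s"
  unfolding hurwitz_series_def
  by (rule summable_sums[OF summable_norm_cancel[OF summable_norm_hurwitz_terms[OF assms]]])

lemma norm_hurwitz_series_le:
  fixes a s :: complex
  assumes "Re a \<ge> 8" "Re s \<ge> 2"
  shows "norm (hurwitz_series a s)
           \<le> (\<Sum>n. 64 / (real n + 8)^2) * 8 powr (- Re s) * arg_factor s"
proof -
  have "norm (hurwitz_series a s) \<le> (\<Sum>n. 8 powr (- Re s) * (64 / (real n + 8)^2) * arg_factor s)"
    unfolding hurwitz_series_def
    by (rule norm_suminf_le[OF norm_shifted_powr_le_square[OF assms]])
       (intro summable_mult2 summable_mult summable_shifted_inverse_square)
  also have "\<dots> = (\<Sum>n. 64 / (real n + 8)^2) * 8 powr (- Re s) * arg_factor s"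
    using suminf_mult[OF summable_shifted_inverse_square, of "8 powr (- Re s) * arg_factor s"]
    by (simp add: mult_ac)
  finally show ?thesis .
qed

lemma holomorphic_on_suminf:
  fixes f :: "nat \<Rightarrow> complex \<Rightarrow> complex"
  assumes S: "open S" and hol: "\<And>n. f n holomorphic_on S"
    and bnd: "\<And>z. z \<in> S \<Longrightarrow> \<exists>d M. 0 < d \<and> cball z d \<subseteq> S \<and> summable M \<and>
                 (\<forall>\<^sub>F n in sequentially. \<forall>x\<in>cball z d. norm (f n x) \<le> M n)"
  shows "(\<lambda>x. \<Sum>n. f n x) holomorphic_on S"
proof (rule holomorphic_uniform_sequence[OF S, where f = "\<lambda>N x. \<Sum>i<N. f i x"])
  show "(\<lambda>x. \<Sum>i<N. f i x) holomorphic_on S" for N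
    by (intro holomorphic_intros hol)
  fix z assume "z \<in> S"
  then obtain d M where d: "0 < d" "cball z d \<subseteq> S" "summable M"
    "\<forall>\<^sub>F n in sequentially. \<forall>x\<in>cball z d. norm (f n x) \<le> M n" using bnd by blast
  show "\<exists>d>0. cball z d \<subseteq> S \<and>
          uniform_limit (cball z d) (\<lambda>N x. \<Sum>i<N. f i x) (\<lambda>x. \<Sum>n. f n x) sequentially"
    using d Weierstrass_m_test_ev[OF d(4) d(3)] by blast
qed

lemma cball_subset_halfplane:
  assumes "d \<le> (Re z - c) / 2" "0 < d"
  shows "cball z d \<subseteq> {s. c < Re s}"
proof
  fix x assume "x \<in> cball z d"
  hence "Re z - Re x \<le> d" using abs_Re_le_cmod[of "z - x"] by (simp add: dist_norm)
  thus "x \<in> {s. c < Re s}" using assms by simp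
qed

lemma holomorphic_hurwitz_series:
  assumes a: "Re a \<ge> 8"
  shows "hurwitz_series a holomorphic_on {s. 2 < Re s}"
proof -
  have "(\<lambda>s. \<Sum>n. (of_nat n + a) powr (-s)) holomorphic_on {s. 2 < Re s}"
  proof (rule holomorphic_on_suminf)
    show "open {s. 2 < Re s}" by (simp add: open_halfspace_Re_gt)
    show "(\<lambda>s. (of_nat n + a) powr (-s)) holomorphic_on {s. 2 < Re s}" for n
      by (intro holomorphic_intros)
    fix z assume z: "z \<in> {s. 2 < Re s}"
    define d where "d = (Re z - 2) / 2"
    have d0: "d > 0" using z by (simp add: d_def)
    have sub: "cball z d \<subseteq> {s. 2 < Re s}"
      by (rule cball_subset_halfplane) (use d0 in \<open>simp_all add: d_def\<close>)
    define M where "M n = 8 powr (- 2) * (64 / (real n + 8)^2) * exp (pi/2 * (\<bar>Im z\<bar> + d))" for n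
    have "summable M" unfolding M_def by (intro summable_mult2 summable_mult summable_shifted_inverse_square)
    moreover have "\<forall>x\<in>cball z d. norm ((of_nat n + a) powr (-x)) \<le> M n" for n
    proof
      fix x assume x: "x \<in> cball z d"
      hence Rx: "Re x \<ge> 2" using sub by auto
      have "\<bar>Im z - Im x\<bar> \<le> d" using x abs_Im_le_cmod[of "z - x"] by (simp add: dist_norm)
      hence "arg_factor x \<le> exp (pi/2 * (\<bar>Im z\<bar> + d))" unfolding arg_factor_def
        by (intro exp_mono mult_left_mono) auto
      moreover have "8 powr (- Re x) \<le> 8 powr (-2)" using Rx by (intro powr_mono) auto
      ultimately have "8 powr (- Re x) * (64 / (real n + 8)^2) * arg_factor x \<le> M n"
        unfolding M_def by (intro mult_mono) (auto simp: arg_factor_def)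
      thus "norm ((of_nat n + a) powr (-x)) \<le> M n"
        using norm_shifted_powr_le_square[OF a Rx, of n] by linarith
    qed
    ultimately show "\<exists>d M. 0 < d \<and> cball z d \<subseteq> {s. 2 < Re s} \<and> summable M \<and>
            (\<forall>\<^sub>F n in sequentially. \<forall>x\<in>cball z d. norm ((of_nat n + a) powr (-x)) \<le> M n)"
      using d0 sub by (intro exI[of _ d] exI[of _ M]) auto
  qed
  thus ?thesis by (simp add: hurwitz_series_def[abs_def])
qed

lemma powr_mult_Re_pos:
  fixes x y w :: complex
  assumes "Re x > 0" "Re y > 0"
  shows "(x * y) powr w = x powr w * y powr w"
proof -
  have x0: "x \<noteq> 0" and y0: "y \<noteq> 0" using assms by auto
  have "Ln (x * y) = Ln x + Ln y"
    using Re_Ln_pos_lt_imp[OF assms(1)] Re_Ln_pos_lt_imp[OF assms(2)] x0 y0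
    by (intro Ln_times_simple) (auto simp: abs_less_iff)
  thus ?thesis using x0 y0 by (simp add: powr_def exp_add distrib_left)
qed

lemma powr_add_one_sums:
  fixes x w :: complex
  assumes x: "Re x > 0" "norm x > 1"
  shows "(\<lambda>k. (w gchoose k) * x powr (w - of_nat k)) sums ((x + 1) powr w)"
proof -
  have x0: "x \<noteq> 0" using x by auto
  have nu: "norm (1/x) < 1" using x by (simp add: norm_divide divide_less_eq)
  have "(\<lambda>k. x powr w * ((w gchoose k) * (1/x)^k)) sums (x powr w * (1 + 1/x) powr w)"
    by (rule sums_mult[OF gen_binomial_complex[OF nu]])
  moreover have "x powr w * ((w gchoose k) * (1/x)^k) = (w gchoose k) * x powr (w - of_nat k)" for k
    using x0 by (simp add: powr_diff power_one_over divide_inverse powr_nat' power_inverse)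
  moreover have "x powr w * (1 + 1/x) powr w = (x + 1) powr w"
  proof -
    have "Re (1/x) = Re x / (norm x)^2" by (simp add: Re_divide cmod_power2)
    hence "Re (1 + 1/x) > 0" using x x0 by (auto intro!: add_pos_pos divide_pos_pos)
    hence "(x * (1 + 1/x)) powr w = x powr w * (1 + 1/x) powr w"
      using x by (intro powr_mult_Re_pos) auto
    moreover have "x * (1 + 1/x) = x + 1" using x0 by (simp add: field_simps)
    ultimately show ?thesis by simp
  qed
  ultimately show ?thesis by simp
qed

lemma norm_gchoose_le_choose:
  fixes z :: complex
  assumes "norm z \<le> real m"
  shows "norm (z gchoose k) \<le> real ((m + k) choose k)"
proof (induction k)
  case 0 thus ?case by simp
next
  case (Suc k)
  have "norm (z gchoose Suc k) = norm (z gchoose k) * (norm (z - of_nat k) / (real k + 1))"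
  proof -
    have "norm (of_nat k + 1 :: complex) = real k + 1"
      by (metis norm_of_nat of_nat_Suc add.commute of_nat_1 of_nat_add)
    thus ?thesis by (simp add: gbinomial_Suc_rec norm_mult norm_divide)
  qed
  also have "norm (z - of_nat k) \<le> real m + real k"
    using norm_triangle_ineq4[of z "of_nat k"] assms by simp
  hence "norm (z gchoose k) * (norm (z - of_nat k) / (real k + 1)) \<le>
         real ((m + k) choose k) * ((real m + real k + 1) / (real k + 1))"
    using Suc.IH by (intro mult_mono divide_right_mono) auto
  also have "real ((m + k) choose k) * ((real m + real k + 1) / (real k + 1))
               = real ((m + Suc k) choose Suc k)"
  proof -
    have "real (Suc k) * real (Suc (m + k) choose Suc k) = real (Suc (m + k)) * real ((m + k) choose k)"
      using Suc_times_binomial[of k "m + k"] by (metis of_nat_mult)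
    thus ?thesis by (simp add: field_simps)
  qed
  finally show ?case .
qed

lemma norm_gchoose_le_power2:
  fixes z :: complex
  assumes "norm z \<le> real m"
  shows "norm (z gchoose k) \<le> 2 ^ (m + k)"
proof -
  have "real ((m + k) choose k) \<le> 2 ^ (m + k)"
    using binomial_le_pow2[of "m+k" k] by (metis of_nat_le_iff of_nat_numeral of_nat_power)
  thus ?thesis using norm_gchoose_le_choose[OF assms, of k] by linarith
qed

lemma summable_on_UNIV_product_nonneg:
  fixes v u :: "nat \<Rightarrow> real"
  assumes "summable v" "summable u" "\<And>n. v n \<ge> 0" "\<And>j. u j \<ge> 0"
  shows "(\<lambda>(n,j). v n * u j) summable_on UNIV"
proof -
  have "(\<lambda>(n,j). v n * u j) summable_on Sigma UNIV (\<lambda>_. UNIV)"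
  proof (rule summable_on_SigmaI[where g = "\<lambda>n. v n * suminf u"])
    show "((\<lambda>y. case (n, y) of (n, j) \<Rightarrow> v n * u j) has_sum v n * suminf u) UNIV" for n
      using sums_nonneg_imp_has_sum[OF sums_mult[OF summable_sums[OF assms(2)], of "v n"]] assms
      by (simp add: mult_nonneg_nonneg)
    show "(\<lambda>n. v n * suminf u) summable_on UNIV"
      using assms by (subst summable_on_UNIV_nonneg_real_iff)
        (auto intro!: summable_mult2 mult_nonneg_nonneg suminf_nonneg)
  qed (use assms in \<open>auto intro!: mult_nonneg_nonneg\<close>)
  thus ?thesis by simp
qed

lemma shifted_powr_tendsto_zero:
  fixes a s :: complex
  assumes a: "Re a \<ge> 8" and s: "Re s > 0"
  shows "(\<lambda>n. (of_nat n + a) powr (- s)) \<longlonglongrightarrow> 0"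
proof (rule Lim_null_comparison)
  show "\<forall>\<^sub>F n in sequentially. norm ((of_nat n + a) powr (- s)) \<le> (real n + 8) powr (- Re s) * arg_factor s"
    using norm_shifted_powr_le[OF a, of s] s by (intro always_eventually allI) simp
  have "filterlim (\<lambda>n. real n + 8) at_top sequentially"
    using filterlim_tendsto_add_at_top[OF tendsto_const filterlim_real_sequentially, of 8]
    by (simp add: add.commute)
  hence "(\<lambda>n. (real n + 8) powr (- Re s)) \<longlonglongrightarrow> 0"
    by (rule tendsto_neg_powr[rotated]) (use s in simp)
  thus "(\<lambda>n. (real n + 8) powr (- Re s) * arg_factor s) \<longlonglongrightarrow> 0"
    by (intro tendsto_mult_left_zero)
qed

lemma norm_binomial_hurwitz_term_le:
  fixes a s :: complex
  assumes a: "Re a \<ge> 8" and s: "Re s \<ge> 2" and m: "norm (1 - s) \<le> real m"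
  shows "norm (((1 - s) gchoose Suc j) * (of_nat n + a) powr (-(s + of_nat j)))
           \<le> 64 / (real n + 8)^2 * (2 ^ m * 2 * 8 powr (- Re s) * arg_factor s * (1/4) ^ j)"
proof -
  have Rsj: "Re (s + of_nat j) \<ge> 2" using s by simp
  have "8 powr (- Re (s + of_nat j)) = 8 powr (- Re s) * 8 powr (- real j)"
    by (simp add: powr_add[symmetric])
  also have "8 powr (- real j) = (1/8::real)^j"
    by (simp add: powr_minus powr_realpow power_one_over inverse_eq_divide)
  finally have "norm ((of_nat n + a) powr (-(s + of_nat j)))
                  \<le> 8 powr (- Re s) * (1/8)^j * (64 / (real n + 8)^2) * arg_factor s"
    using norm_shifted_powr_le_square[OF a Rsj, of n] by simp
  hence "norm (((1 - s) gchoose Suc j) * (of_nat n + a) powr (-(s + of_nat j)))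
           \<le> 2 ^ (m + Suc j) * (8 powr (- Re s) * (1/8)^j * (64 / (real n + 8)^2) * arg_factor s)"
    unfolding norm_mult by (intro mult_mono norm_gchoose_le_power2[OF m]) auto
  also have "(2::real) ^ (m + Suc j) * (1/8)^j = 2 ^ m * 2 * (1/4) ^ j"
    by (simp add: power_add power_one_over field_simps flip: power_mult_distrib)
  hence "2 ^ (m + Suc j) * (8 powr (- Re s) * (1/8)^j * (64 / (real n + 8)^2) * arg_factor s)
           = 64 / (real n + 8)^2 * (2 ^ m * 2 * 8 powr (- Re s) * arg_factor s * (1/4) ^ j)"
    by (simp add: mult_ac)
  finally show ?thesis .
qed

text \<open>Expanding \<open>(n + a + 1)\<^bsup>1-s\<^esup> - (n + a)\<^bsup>1-s\<^esup>\<close> binomially and summing over \<open>n\<close>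
  telescopes to \<open>-a\<^bsup>1-s\<^esup>\<close>; exchanging the two summations gives the identity.\<close>

lemma binomial_hurwitz_sums:
  fixes a s :: complex
  assumes a: "Re a \<ge> 8" and s: "Re s \<ge> 2"
  shows "(\<lambda>j. ((1 - s) gchoose Suc j) * hurwitz_series a (s + of_nat j)) sums (- (a powr (1 - s)))"
proof -
  define w where "w = 1 - s"
  obtain m :: nat where m: "norm w \<le> real m" using real_arch_simple by blast
  define A where "A n j = (w gchoose Suc j) * (of_nat n + a) powr (-(s + of_nat j))" for n j :: nat
  define v where "v n = 64 / (real n + 8)^2" for n :: nat
  define u where "u j = 2 ^ m * 2 * 8 powr (- Re s) * arg_factor s * (1/4) ^ j" for j :: nat
  have v0: "v n \<ge> 0" and u0: "u j \<ge> 0" for n j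
    using arg_factor_pos[of s] by (simp_all add: v_def u_def)
  have sv: "summable v" unfolding v_def by (rule summable_shifted_inverse_square)
  have su: "summable u" unfolding u_def by (intro summable_mult summable_geometric) auto
  have bnd: "norm (A n j) \<le> v n * u j" for n j
    unfolding A_def v_def u_def w_def using norm_binomial_hurwitz_term_le[OF a s] m w_def by blast
  have abs_sum: "(\<lambda>(n,j). A n j) summable_on UNIV"
    by (rule abs_summable_summable, rule Infinite_Sum.abs_summable_on_comparison_test'
          [OF summable_on_UNIV_product_nonneg[OF sv su v0 u0]]) (use bnd in auto)
  hence abs_sum': "(\<lambda>(j,n). A n j) summable_on UNIV"
    using summable_on_swap[of "\<lambda>(n,j). A n j" UNIV UNIV] by (simp add: case_prod_beta)
  define L where "L n = (of_nat n + a + 1) powr w - (of_nat n + a) powr w" for n :: nat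
  have row: "(\<Sum>\<^sub>\<infinity>j. A n j) = L n" for n
  proof -
    have "Re (of_nat n + a) > 0" "norm (of_nat n + a) > 1"
      using a complex_Re_le_cmod[of "of_nat n + a"] by auto
    from powr_add_one_sums[OF this, of w]
    have "(\<lambda>j. (w gchoose Suc j) * (of_nat n + a) powr (w - of_nat (Suc j))) sums L n"
      by (subst sums_Suc_iff) (simp add: L_def)
    moreover have "w - of_nat (Suc j) = -(s + of_nat j)" for j by (simp add: w_def)
    ultimately have "(\<lambda>j. A n j) sums L n" by (simp only: A_def)
    moreover have "summable (\<lambda>j. norm (A n j))"
      by (rule summable_comparison_test'[OF summable_mult[OF su, of "v n"]]) (use bnd in auto)
    ultimately show ?thesis by (intro infsumI norm_summable_imp_has_sum)
  qed
  define B where "B j = (w gchoose Suc j) * hurwitz_series a (s + of_nat j)" for j :: nat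
  have column: "(\<Sum>\<^sub>\<infinity>n. A n j) = B j" for j
  proof -
    have "Re (s + of_nat j) \<ge> 2" using s by simp
    from hurwitz_series_sums[OF a this] summable_norm_hurwitz_terms[OF a this]
    have "((\<lambda>n. (of_nat n + a) powr (-(s + of_nat j))) has_sum hurwitz_series a (s + of_nat j)) UNIV"
      by (rule norm_summable_imp_has_sum[rotated])
    from has_sum_cmult_right[OF this, of "w gchoose Suc j"] show ?thesis
      unfolding A_def B_def by (rule infsumI)
  qed
  have "(\<lambda>n. (of_nat (Suc n) + a) powr w - (of_nat n + a) powr w) sums (0 - a powr w)"
    using telescope_sums[OF shifted_powr_tendsto_zero[OF a, of "- w"]] s by (simp add: w_def)
  moreover have "(\<lambda>n. (of_nat (Suc n) + a) powr w - (of_nat n + a) powr w) = L"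
    by (simp add: L_def fun_eq_iff add_ac)
  ultimately have "L sums (0 - a powr w)" by simp
  moreover have "L summable_on UNIV"
    using summable_on_Sigma_banach[of "\<lambda>n j. A n j" UNIV "\<lambda>_. UNIV"] abs_sum row by simp
  ultimately have "infsum L UNIV = - (a powr w)"
    using sums_unique2[OF has_sum_imp_sums[OF has_sum_infsum]] by simp
  moreover have "(\<Sum>\<^sub>\<infinity>n. \<Sum>\<^sub>\<infinity>j. A n j) = (\<Sum>\<^sub>\<infinity>j. \<Sum>\<^sub>\<infinity>n. A n j)"
    using infsum_swap_banach[of "\<lambda>n j. A n j" UNIV UNIV] abs_sum by simp
  ultimately have "infsum B UNIV = - (a powr w)" using row column by simp
  moreover have "B summable_on UNIV"
    using summable_on_Sigma_banach[of "\<lambda>j n. A n j" UNIV "\<lambda>_. UNIV"] abs_sum' column by simp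
  ultimately have "B sums (- (a powr w))" using has_sum_imp_sums[OF has_sum_infsum[of B]] by simp
  thus ?thesis unfolding B_def[abs_def] w_def .
qed

text \<open>The factor \<open>1 - s\<close> removes the pole at \<open>s = 1\<close>: the continuation of
  \<open>hurwitz_regularized a\<close> is entire.\<close>

definition hurwitz_regularized :: "complex \<Rightarrow> complex \<Rightarrow> complex" where
  "hurwitz_regularized a s = (1 - s) * hurwitz_series a s"

definition hurwitz_recursion_coeff :: "complex \<Rightarrow> nat \<Rightarrow> complex" where
  "hurwitz_recursion_coeff s j = ((1 - s) gchoose Suc j) / of_nat (j + 2)"

lemma hurwitz_regularized_recursion:
  fixes a s :: complex
  assumes a: "Re a \<ge> 8" and s: "Re s \<ge> 2"
  shows "(\<lambda>j. hurwitz_recursion_coeff s j * hurwitz_regularized a (s + of_nat j + 1))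
           sums (- (a powr (1 - s)) - hurwitz_regularized a s)"
proof -
  define B where "B j = ((1 - s) gchoose Suc j) * hurwitz_series a (s + of_nat j)" for j
  have "B (Suc j) = hurwitz_recursion_coeff s j * hurwitz_regularized a (s + of_nat j + 1)" for j
  proof -
    have "B (Suc j) = ((1 - s) gchoose Suc j) * ((1 - s - of_nat (Suc j)) / (of_nat (Suc j) + 1))
                        * hurwitz_series a (s + of_nat j + 1)"
      unfolding B_def by (subst gbinomial_Suc_rec) (simp add: add_ac)
    thus ?thesis
      by (simp add: hurwitz_recursion_coeff_def hurwitz_regularized_def field_simps)
  qed
  moreover have "B 0 = hurwitz_regularized a s" by (simp add: B_def hurwitz_regularized_def)
  moreover have "B sums (- (a powr (1 - s)))" unfolding B_def by (rule binomial_hurwitz_sums[OF a s])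
  ultimately show ?thesis using sums_Suc_iff[of B "- (a powr (1 - s)) - B 0"] by simp
qed

lemma norm_hurwitz_recursion_term_le:
  fixes a s :: complex
  assumes a: "Re a \<ge> 8" and m: "norm s + norm (1 - s) \<le> real m"
    and j: "2 \<le> Re s + real j + 1"
  shows "norm (hurwitz_recursion_coeff s j * hurwitz_regularized a (s + of_nat j + 1))
           \<le> 2 ^ (2 * m + 1) * (\<Sum>n. 64 / (real n + 8)^2) * 8 powr (- Re s - 1)
               * arg_factor s * (1/2) ^ j"
proof -
  define C where "C = (\<Sum>n. 64 / (real n + 8)^2)"
  have C0: "C \<ge> 0" unfolding C_def by (intro suminf_nonneg summable_shifted_inverse_square) auto
  have coeff: "norm (hurwitz_recursion_coeff s j) \<le> 2 ^ (m + Suc j)"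
  proof -
    have "norm ((1 - s) gchoose Suc j) / real (j + 2) \<le> norm ((1 - s) gchoose Suc j) / 1"
      by (rule divide_left_mono) auto
    hence "norm (hurwitz_recursion_coeff s j) \<le> norm ((1 - s) gchoose Suc j)"
      unfolding hurwitz_recursion_coeff_def norm_divide norm_of_nat by simp
    also have "\<dots> \<le> 2 ^ (m + Suc j)"
      using m norm_ge_zero[of s] by (intro norm_gchoose_le_power2) linarith
    finally show ?thesis .
  qed
  have factor: "norm (- s - of_nat j) \<le> 2 ^ (m + j)"
  proof -
    have "norm (- s - of_nat j) \<le> norm s + real j"
      using norm_triangle_ineq4[of "-s" "of_nat j"] by simp
    also have "\<dots> \<le> real (m + j)" using m norm_ge_zero[of "1 - s"] by (simp only: of_nat_add)
    also have "\<dots> \<le> 2 ^ (m + j)" using less_exp[of "m + j"]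
      by (metis less_imp_le of_nat_le_iff of_nat_numeral of_nat_power)
    finally show ?thesis .
  qed
  have series: "norm (hurwitz_series a (s + of_nat j + 1)) \<le> C * (8 powr (- Re s - 1) * (1/8) ^ j) * arg_factor s"
  proof -
    have "8 powr (- Re (s + of_nat j + 1)) = 8 powr ((- Re s - 1) + - real j)"
      by (rule arg_cong[where f = "\<lambda>x. (8::real) powr x"]) simp
    also have "\<dots> = 8 powr (- Re s - 1) * 8 powr (- real j)"
      by (rule powr_add)
    also have "8 powr (- real j) = (1/8::real) ^ j"
      by (simp add: powr_minus powr_realpow power_one_over inverse_eq_divide)
    finally show ?thesis
      using norm_hurwitz_series_le[OF a, of "s + of_nat j + 1"] j
      by (simp add: C_def arg_factor_def add.assoc)
  qed
  have "norm (hurwitz_recursion_coeff s j * hurwitz_regularized a (s + of_nat j + 1))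
          = norm (hurwitz_recursion_coeff s j) * norm (- s - of_nat j) * norm (hurwitz_series a (s + of_nat j + 1))"
  proof -
    have "1 - (s + of_nat j + 1) = - s - of_nat j" by simp
    thus ?thesis by (simp only: hurwitz_regularized_def norm_mult mult.assoc)
  qed
  also have "\<dots> \<le> 2 ^ (m + Suc j) * 2 ^ (m + j) * (C * (8 powr (- Re s - 1) * (1/8) ^ j) * arg_factor s)"
    by (intro mult_mono coeff factor series) auto
  also have "\<dots> = 2 ^ (2 * m + 1) * C * 8 powr (- Re s - 1) * arg_factor s * (1/2) ^ j"
  proof -
    have "(2::real) ^ (m + Suc j) * 2 ^ (m + j) = 2 ^ (2 * m + 1) * 2 ^ j * 2 ^ j"
      unfolding power_add[symmetric] by (simp add: algebra_simps)
    moreover have "(2::real) ^ j * 2 ^ j * (1/8) ^ j = (1/2) ^ j"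
      unfolding power_mult_distrib[symmetric] by simp
    ultimately show ?thesis by (simp add: mult_ac)
  qed
  finally show ?thesis by (simp only: C_def)
qed

lemma holomorphic_on_gchoose:
  fixes f :: "complex \<Rightarrow> complex"
  assumes "f holomorphic_on S"
  shows "(\<lambda>s. f s gchoose k) holomorphic_on S"
  unfolding gbinomial_prod_rev by (intro holomorphic_intros assms) auto

text \<open>The recursion expresses the function at \<open>s\<close> through its values at \<open>s + j + 1\<close>,
  \<open>j \<ge> 0\<close>, so a continuation to \<open>Re s > 2 - K\<close> yields one to \<open>Re s > 1 - K\<close>.\<close>

lemma hurwitz_regularized_extension_step:
  fixes a :: complex and K :: nat
  assumes a: "Re a \<ge> 8"
    and f: "f holomorphic_on {s. 2 - real K < Re s}" "\<And>s. 2 < Re s \<Longrightarrow> f s = hurwitz_regularized a s"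
  shows "\<exists>g. g holomorphic_on {s. 2 - real (Suc K) < Re s} \<and>
             (\<forall>s. 2 < Re s \<longrightarrow> g s = hurwitz_regularized a s)"
proof (intro exI conjI allI impI)
  define \<Omega> where "\<Omega> = {s. 2 - real (Suc K) < Re s}"
  define u where "u j s = hurwitz_recursion_coeff s j * f (s + of_nat j + 1)" for j s
  show "- (a powr (1 - s)) - (\<Sum>j. u j s) = hurwitz_regularized a s" if "2 < Re s" for s
  proof -
    have "u j s = hurwitz_recursion_coeff s j * hurwitz_regularized a (s + of_nat j + 1)" for j
      using that by (simp add: u_def f(2))
    hence "(\<Sum>j. u j s) = - (a powr (1 - s)) - hurwitz_regularized a s"
      using sums_unique[OF hurwitz_regularized_recursion[OF a, of s]] that by simp
    thus ?thesis by simp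
  qed
  have "(\<lambda>s. \<Sum>j. u j s) holomorphic_on \<Omega>"
  proof (rule holomorphic_on_suminf)
    show "open \<Omega>" unfolding \<Omega>_def by (simp add: open_halfspace_Re_gt)
    have "(\<lambda>s. f (s + (of_nat j + 1))) holomorphic_on \<Omega>" for j
      by (rule holomorphic_on_compose_gen[OF _ f(1), unfolded o_def])
         (auto simp: \<Omega>_def intro!: holomorphic_intros)
    thus "u j holomorphic_on \<Omega>" for j
      unfolding u_def hurwitz_recursion_coeff_def add.assoc
      by (intro holomorphic_intros holomorphic_on_gchoose) auto
    fix z assume z: "z \<in> \<Omega>"
    define d where "d = min 1 ((Re z - (2 - real (Suc K))) / 2)"
    have d0: "d > 0" using z by (simp add: d_def \<Omega>_def)
    have sub: "cball z d \<subseteq> \<Omega>"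
      unfolding \<Omega>_def by (rule cball_subset_halfplane[OF _ d0]) (unfold d_def, rule min.cobounded2)
    have near: "Re s \<ge> Re z - 1" "arg_factor s \<le> exp (pi / 2 * (\<bar>Im z\<bar> + 1))"
      "norm s + norm (1 - s) \<le> norm z + norm (1 - z) + 2" if "s \<in> cball z d" for s
    proof -
      have ds: "norm (z - s) \<le> 1" using that by (simp add: dist_norm d_def)
      show "Re s \<ge> Re z - 1" using ds abs_Re_le_cmod[of "z - s"] by simp
      show "arg_factor s \<le> exp (pi / 2 * (\<bar>Im z\<bar> + 1))"
        using ds abs_Im_le_cmod[of "z - s"] unfolding arg_factor_def by simp
      show "norm s + norm (1 - s) \<le> norm z + norm (1 - z) + 2"
        using ds norm_triangle_ineq2[of s z] norm_triangle_ineq2[of "1 - s" "1 - z"]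
        by (simp add: norm_minus_commute)
    qed
    obtain m :: nat where m: "norm z + norm (1 - z) + 2 \<le> real m" using real_arch_simple by blast
    obtain J :: nat where J: "3 + \<bar>Re z\<bar> \<le> real J" using real_arch_simple by blast
    define M where "M j = 2 ^ (2 * m + 1) * (\<Sum>n. 64 / (real n + 8)^2) * 8 powr (- Re z)
                            * exp (pi / 2 * (\<bar>Im z\<bar> + 1)) * (1/2) ^ j" for j :: nat
    have C0: "(\<Sum>n. 64 / (real n + 8)^2) \<ge> 0"
      by (intro suminf_nonneg summable_shifted_inverse_square) auto
    have "summable M" unfolding M_def by (intro summable_mult summable_geometric) auto
    moreover have "\<forall>\<^sub>F j in sequentially. \<forall>s\<in>cball z d. norm (u j s) \<le> M j"
    proof (rule eventually_sequentiallyI[of J], intro ballI)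
      fix j s assume j: "J \<le> j" and s: "s \<in> cball z d"
      have "real J \<le> real j" using j by simp
      hence far: "2 < Re (s + of_nat j + 1)" using near(1)[OF s] J by simp
      have "norm (u j s) \<le> 2 ^ (2 * m + 1) * (\<Sum>n. 64 / (real n + 8)^2) * 8 powr (- Re s - 1)
                              * arg_factor s * (1/2) ^ j"
        unfolding u_def f(2)[OF far]
        by (rule norm_hurwitz_recursion_term_le[OF a]) (use near(3)[OF s] m far in auto)
      also have "\<dots> \<le> M j"
        unfolding M_def using near(1,2)[OF s] C0
        by (intro mult_mono mult_right_mono powr_mono) (auto simp: arg_factor_def)
      finally show "norm (u j s) \<le> M j" .
    qed
    ultimately show "\<exists>d M. 0 < d \<and> cball z d \<subseteq> \<Omega> \<and> summable M \<and>
       (\<forall>\<^sub>F j in sequentially. \<forall>s\<in>cball z d. norm (u j s) \<le> M j)"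
      using d0 sub by blast
  qed
  thus "(\<lambda>s. - (a powr (1 - s)) - (\<Sum>j. u j s)) holomorphic_on {s. 2 - real (Suc K) < Re s}"
    unfolding \<Omega>_def by (intro holomorphic_intros)
qed

lemma holomorphic_on_UNIV_from_halfplanes:
  fixes g :: "complex \<Rightarrow> complex"
  assumes "\<And>K::nat. \<exists>f. f holomorphic_on {s. c - real K < Re s} \<and> (\<forall>s. c < Re s \<longrightarrow> f s = g s)"
  shows "\<exists>h. h holomorphic_on UNIV \<and> (\<forall>s. c < Re s \<longrightarrow> h s = g s)"
proof -
  define \<Omega> where "\<Omega> K = {s. c - real K < Re s}" for K :: nat
  obtain F where F: "\<And>K. F K holomorphic_on \<Omega> K" "\<And>K s. c < Re s \<Longrightarrow> F K s = g s"
    using assms unfolding \<Omega>_def by metis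
  have open_\<Omega>: "open (\<Omega> K)" for K unfolding \<Omega>_def by (simp add: open_halfspace_Re_gt)
  have agree: "F K1 s = F K2 s" if "s \<in> \<Omega> K1" "s \<in> \<Omega> K2" for K1 K2 s
  proof -
    define L where "L = min K1 K2"
    have sL: "s \<in> \<Omega> L" using that unfolding \<Omega>_def L_def by (auto simp: min_def)
    have sub: "\<Omega> L \<subseteq> \<Omega> K1" "\<Omega> L \<subseteq> \<Omega> K2" unfolding \<Omega>_def L_def by auto
    show ?thesis
    proof (rule analytic_continuation_open[where s = "{s. c < Re s}" and s' = "\<Omega> L"
                                        and f = "F K1" and g = "F K2" and z = s])
      show "{s. c < Re s} \<noteq> {}" by (auto intro: exI[of _ "of_real c + 1"])
      show "connected (\<Omega> L)" unfolding \<Omega>_def by (intro convex_connected convex_halfspace_Re_gt)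
      show "F K1 holomorphic_on \<Omega> L" "F K2 holomorphic_on \<Omega> L"
        using holomorphic_on_subset[OF F(1) sub(1)] holomorphic_on_subset[OF F(1) sub(2)] .
    qed (use open_\<Omega> sL F(2) in \<open>auto simp: open_halfspace_Re_gt \<Omega>_def\<close>)
  qed
  define K_of where "K_of s = nat \<lceil>c - Re s\<rceil> + 1" for s
  have in_\<Omega>: "s \<in> \<Omega> (K_of s)" for s
  proof -
    have "c - Re s \<le> real (nat \<lceil>c - Re s\<rceil>)" by linarith
    thus ?thesis unfolding \<Omega>_def K_of_def by simp
  qed
  define h where "h s = F (K_of s) s" for s
  have hF: "h s = F K s" if "s \<in> \<Omega> K" for s K unfolding h_def using agree[OF in_\<Omega> that] .
  have "h holomorphic_on \<Omega> K" for K by (rule holomorphic_transform[OF F(1)]) (use hF in auto)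
  hence "h field_differentiable at s" for s
    using holomorphic_on_imp_differentiable_at[OF _ open_\<Omega> in_\<Omega>] by blast
  hence "h holomorphic_on UNIV" by (auto simp: holomorphic_on_def field_differentiable_at_within)
  moreover have "h s = g s" if "c < Re s" for s
    using hF[of s 0] F(2)[OF that] that by (simp add: \<Omega>_def)
  ultimately show ?thesis by blast
qed

lemma hurwitz_regularized_entire:
  assumes a: "Re a \<ge> 8"
  shows "\<exists>T. T holomorphic_on UNIV \<and> (\<forall>s. 2 < Re s \<longrightarrow> T s = hurwitz_regularized a s)"
proof (rule holomorphic_on_UNIV_from_halfplanes)
  show "\<exists>f. f holomorphic_on {s. 2 - real K < Re s} \<and> (\<forall>s. 2 < Re s \<longrightarrow> f s = hurwitz_regularized a s)"
    for K
  proof (induction K)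
    case 0
    have "hurwitz_regularized a holomorphic_on {s. 2 < Re s}"
      unfolding hurwitz_regularized_def[abs_def]
      by (intro holomorphic_intros holomorphic_hurwitz_series[OF a])
    thus ?case by auto
  next
    case (Suc K)
    thus ?case using hurwitz_regularized_extension_step[OF a] by blast
  qed
qed

lemma summable_norm_shifted_powr:
  fixes D s :: complex
  assumes D: "Re D > 0" and s: "Re s \<ge> 2"
  shows "summable (\<lambda>n. norm ((of_nat n + D) powr (-s)))"
proof -
  have "summable (\<lambda>n. norm ((of_nat n + (D + 8)) powr (-s)))"
    by (rule summable_norm_hurwitz_terms) (use D s in auto)
  hence "summable (\<lambda>n. norm ((of_nat (n + 8) + D) powr (-s)))" by (simp add: add_ac)
  thus ?thesis by (subst (asm) summable_iff_shift)
qed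

text \<open>The first eight terms are split off so that the recursion applies to the tail,
  whose parameter \<open>D + 8\<close> satisfies \<open>Re (D + 8) \<ge> 8\<close>.\<close>

lemma hurwitz_meromorphic_continuation:
  fixes D :: complex
  assumes D: "Re D > 0"
  shows "\<exists>h. h meromorphic_on UNIV \<and> (\<forall>s. 2 < Re s \<longrightarrow> (\<lambda>n. (of_nat n + D) powr (-s)) sums h s)"
proof -
  obtain T where T: "T holomorphic_on UNIV" "\<And>s. 2 < Re s \<Longrightarrow> T s = hurwitz_regularized (D + 8) s"
    using hurwitz_regularized_entire[of "D + 8"] D by auto
  define h where "h s = (\<Sum>n<8. (of_nat n + D) powr (-s)) + T s / (1 - s)" for s
  have "(\<lambda>s. \<Sum>n<8. (of_nat n + D) powr (-s)) meromorphic_on UNIV"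
    by (intro analytic_on_imp_meromorphic_on analytic_intros)
       (use D in \<open>auto simp: complex_nonpos_Reals_iff\<close>)
  moreover have "T analytic_on UNIV" using T(1) by (simp add: analytic_on_open)
  hence "(\<lambda>s. T s / (1 - s)) meromorphic_on UNIV"
    by (intro meromorphic_intros analytic_on_imp_meromorphic_on analytic_intros)
  ultimately have "h meromorphic_on UNIV" unfolding h_def by (rule meromorphic_on_add)
  moreover have "(\<lambda>n. (of_nat n + D) powr (-s)) sums h s" if s: "2 < Re s" for s
  proof -
    have "(\<lambda>n. (of_nat n + (D + 8)) powr (-s)) sums hurwitz_series (D + 8) s"
      by (rule hurwitz_series_sums) (use D s in auto)
    moreover have "hurwitz_series (D + 8) s = T s / (1 - s)"
      using T(2)[OF s] s by (auto simp: hurwitz_regularized_def)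
    ultimately have "(\<lambda>n. (of_nat (n + 8) + D) powr (-s)) sums (T s / (1 - s))"
      by (simp add: add_ac)
    thus ?thesis
      using sums_iff_shift[of "\<lambda>n. (of_nat n + D) powr (-s)" 8] by (simp add: h_def add_ac)
  qed
  ultimately show ?thesis by blast
qed

section \<open>Barnes series with unit weights\<close>

definition poly_seq :: "(nat \<Rightarrow> 'a::comm_ring_1) \<Rightarrow> bool" where
  "poly_seq f \<longleftrightarrow> (\<exists>p. \<forall>N. f N = poly p (of_nat N))"

lemma poly_seq_const: "poly_seq (\<lambda>N. c)"
  unfolding poly_seq_def by (intro exI[of _ "[:c:]"]) simp

lemma poly_seq_of_nat: "poly_seq of_nat"
  unfolding poly_seq_def by (intro exI[of _ "[:0, 1:]"]) simp

lemma poly_seq_add: "poly_seq f \<Longrightarrow> poly_seq g \<Longrightarrow> poly_seq (\<lambda>N. f N + g N)"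
  unfolding poly_seq_def by (metis poly_add)

lemma poly_seq_uminus: "poly_seq f \<Longrightarrow> poly_seq (\<lambda>N. - f N)"
  unfolding poly_seq_def by (metis poly_minus)

lemma poly_seq_diff: "poly_seq f \<Longrightarrow> poly_seq g \<Longrightarrow> poly_seq (\<lambda>N. f N - g N)"
  unfolding poly_seq_def by (metis poly_diff)

lemma poly_seq_mult: "poly_seq f \<Longrightarrow> poly_seq g \<Longrightarrow> poly_seq (\<lambda>N. f N * g N)"
  unfolding poly_seq_def by (metis poly_mult)

lemma poly_seq_power: "poly_seq f \<Longrightarrow> poly_seq (\<lambda>N. f N ^ k)"
  by (induction k) (auto intro: poly_seq_mult poly_seq_const)

lemma poly_seq_sum: "(\<And>i. i \<in> I \<Longrightarrow> poly_seq (f i)) \<Longrightarrow> poly_seq (\<lambda>N. \<Sum>i\<in>I. f i N)"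
  by (induction I rule: infinite_finite_induct) (auto intro: poly_seq_add poly_seq_const)

lemma sum_powers_recurrence:
  "(of_nat N + 1 :: 'a::comm_ring_1) ^ Suc k =
     of_nat (Suc k) * (\<Sum>i\<le>N. of_nat i ^ k) + (\<Sum>b<k. of_nat (Suc k choose b) * (\<Sum>i\<le>N. of_nat i ^ b))"
proof -
  have "(of_nat N + 1 :: 'a) ^ Suc k = (\<Sum>i\<le>N. of_nat (Suc i) ^ Suc k - of_nat i ^ Suc k)"
    using sum_Suc_diff[of 0 N "\<lambda>i. (of_nat i :: 'a) ^ Suc k"] by (simp add: atLeast0AtMost add.commute)
  also have "\<dots> = (\<Sum>i\<le>N. \<Sum>b\<le>k. of_nat (Suc k choose b) * of_nat i ^ b)"
  proof (rule sum.cong[OF refl])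
    fix i
    have "(of_nat (Suc i) :: 'a) ^ Suc k = (\<Sum>b\<le>Suc k. of_nat (Suc k choose b) * of_nat i ^ b)"
      using binomial_ring[of "of_nat i :: 'a" 1 "Suc k"] by (simp add: add.commute)
    thus "(of_nat (Suc i) :: 'a) ^ Suc k - of_nat i ^ Suc k =
            (\<Sum>b\<le>k. of_nat (Suc k choose b) * of_nat i ^ b)"
      by (simp add: sum.atMost_Suc)
  qed
  also have "\<dots> = (\<Sum>b\<le>k. of_nat (Suc k choose b) * (\<Sum>i\<le>N. of_nat i ^ b))"
    by (subst sum.swap) (simp add: sum_distrib_left)
  also have "\<dots> = (\<Sum>b<k. of_nat (Suc k choose b) * (\<Sum>i\<le>N. of_nat i ^ b))
                   + of_nat (Suc k) * (\<Sum>i\<le>N. of_nat i ^ k)"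
    by (simp only: lessThan_Suc_atMost[symmetric] sum.lessThan_Suc binomial_Suc_n)
  finally show ?thesis by (simp add: add.commute)
qed

lemma poly_seq_sum_powers: "poly_seq (\<lambda>N. \<Sum>i\<le>N. (of_nat i :: 'a::field_char_0) ^ k)"
proof (induction k rule: less_induct)
  case (less k)
  have "(\<Sum>i\<le>N. (of_nat i :: 'a) ^ k) =
          ((of_nat N + 1) ^ Suc k - (\<Sum>b<k. of_nat (Suc k choose b) * (\<Sum>i\<le>N. of_nat i ^ b)))
          * (1 / of_nat (Suc k))" for N
    unfolding sum_powers_recurrence[of N k] by (simp del: of_nat_Suc)
  moreover have "poly_seq (\<lambda>N. ((of_nat N + 1 :: 'a) ^ Suc k
                   - (\<Sum>b<k. of_nat (Suc k choose b) * (\<Sum>i\<le>N. of_nat i ^ b))) * (1 / of_nat (Suc k)))"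
    by (intro poly_seq_mult poly_seq_diff poly_seq_power poly_seq_add poly_seq_of_nat poly_seq_const
              poly_seq_sum less.IH) auto
  ultimately show ?case by simp
qed

lemma poly_seq_partial_sums:
  fixes f :: "nat \<Rightarrow> 'a::field_char_0"
  assumes "poly_seq f"
  shows "poly_seq (\<lambda>N. \<Sum>i\<le>N. f i)"
proof -
  obtain p where p: "\<And>N. f N = poly p (of_nat N)" using assms by (auto simp: poly_seq_def)
  have "(\<Sum>i\<le>N. f i) = (\<Sum>j\<le>degree p. coeff p j * (\<Sum>i\<le>N. (of_nat i :: 'a) ^ j))" for N
    by (simp add: p poly_altdef sum_distrib_left) (rule sum.swap)
  moreover have "poly_seq (\<lambda>N. \<Sum>j\<le>degree p. coeff p j * (\<Sum>i\<le>N. (of_nat i :: 'a) ^ j))"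
    by (intro poly_seq_sum poly_seq_mult poly_seq_const poly_seq_sum_powers)
  ultimately show ?thesis by simp
qed

lemma poly_seq_convolution:
  fixes f g :: "nat \<Rightarrow> 'a::field_char_0"
  assumes f: "poly_seq f" and g: "poly_seq g"
  shows "poly_seq (\<lambda>N. \<Sum>i\<le>N. f i * g (N - i))"
proof -
  obtain p where p: "\<And>k. g k = poly p (of_nat k)" using g by (auto simp: poly_seq_def)
  have "(\<Sum>i\<le>N. f i * g (N - i)) =
          (\<Sum>l\<le>degree p. \<Sum>t\<le>l. coeff p l * of_nat (l choose t) * of_nat N ^ t
                                  * (\<Sum>i\<le>N. f i * (- of_nat i) ^ (l - t)))" for N
  proof -
    have "f i * g (N - i) = (\<Sum>l\<le>degree p. \<Sum>t\<le>l. coeff p l * of_nat (l choose t) * of_nat N ^ t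
                                  * (f i * (- of_nat i) ^ (l - t)))" if "i \<le> N" for i
    proof -
      have "g (N - i) = (\<Sum>l\<le>degree p. coeff p l * (of_nat N - of_nat i) ^ l)"
        using that by (simp add: p poly_altdef of_nat_diff)
      moreover have "(of_nat N - of_nat i :: 'a) ^ l =
                       (\<Sum>t\<le>l. of_nat (l choose t) * of_nat N ^ t * (- of_nat i) ^ (l - t))" for l
        using binomial_ring[of "of_nat N" "- of_nat i :: 'a" l] by simp
      ultimately show ?thesis by (simp add: sum_distrib_left mult_ac)
    qed
    hence "(\<Sum>i\<le>N. f i * g (N - i)) = (\<Sum>i\<le>N. \<Sum>l\<le>degree p. \<Sum>t\<le>l. coeff p l * of_nat (l choose t)
                                  * of_nat N ^ t * (f i * (- of_nat i) ^ (l - t)))"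
      by (intro sum.cong) auto
    also have "\<dots> = (\<Sum>l\<le>degree p. \<Sum>t\<le>l. \<Sum>i\<le>N. coeff p l * of_nat (l choose t)
                                  * of_nat N ^ t * (f i * (- of_nat i) ^ (l - t)))"
      by (subst sum.swap) (simp add: sum.swap[of _ "{..N}"])
    finally show ?thesis by (simp add: sum_distrib_left)
  qed
  moreover have "poly_seq (\<lambda>N. \<Sum>l\<le>degree p. \<Sum>t\<le>l. coeff p l * of_nat (l choose t) * of_nat N ^ t
                                  * (\<Sum>i\<le>N. f i * (- of_nat i) ^ (l - t)))"
    by (intro poly_seq_sum poly_seq_mult poly_seq_const poly_seq_power poly_seq_of_nat
              poly_seq_uminus poly_seq_partial_sums f)
  ultimately show ?thesis by simp
qed

lemma poly_seq_expand_at: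
  fixes f :: "nat \<Rightarrow> 'a::comm_ring_1"
  assumes "poly_seq f"
  shows "\<exists>r J. \<forall>N. f N = (\<Sum>j\<le>J. r j * (of_nat N + D) ^ j)"
proof -
  obtain p where p: "\<And>N. f N = poly p (of_nat N)" using assms by (auto simp: poly_seq_def)
  define q where "q = pcompose p [:-D, 1:]"
  have "f N = poly q (of_nat N + D)" for N by (simp add: q_def poly_pcompose p)
  thus ?thesis by (intro exI[of _ "coeff q"] exI[of _ "degree q"]) (simp add: poly_altdef)
qed

definition weak_compositions :: "nat \<Rightarrow> nat \<Rightarrow> (nat \<Rightarrow> nat) set" where
  "weak_compositions P N = {m \<in> PiE {..<P} (\<lambda>_. UNIV). (\<Sum>p<P. m p) = N}"

lemma weak_compositions_subset: "weak_compositions P N \<subseteq> PiE {..<P} (\<lambda>_. {..N})"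
proof
  fix m assume m: "m \<in> weak_compositions P N"
  have "m p \<le> N" if "p < P" for p
  proof -
    have "m p \<le> (\<Sum>q<P. m q)" using that by (intro member_le_sum) auto
    thus ?thesis using m by (simp add: weak_compositions_def)
  qed
  thus "m \<in> PiE {..<P} (\<lambda>_. {..N})" using m by (auto simp: weak_compositions_def PiE_iff)
qed

lemma finite_weak_compositions: "finite (weak_compositions P N)"
  by (rule finite_subset[OF weak_compositions_subset]) (simp add: finite_PiE)

lemma card_weak_compositions_le: "card (weak_compositions P N) \<le> (N + 1) ^ P"
proof -
  have "card (weak_compositions P N) \<le> card (PiE {..<P} (\<lambda>_. {..N}))"
    by (rule card_mono[OF _ weak_compositions_subset]) (simp add: finite_PiE)
  also have "\<dots> = (N + 1) ^ P" by (simp add: card_PiE)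
  finally show ?thesis .
qed

lemma weak_compositions_0: "weak_compositions 0 N = (if N = 0 then {\<lambda>_. undefined} else {})"
  by (auto simp: weak_compositions_def PiE_iff extensional_def)

lemma bij_betw_weak_compositions_Suc:
  "bij_betw (\<lambda>(i, m). m(P := N - i)) (SIGMA i:{..N}. weak_compositions P i)
     (weak_compositions (Suc P) N)"
proof (rule bij_betwI[where g = "\<lambda>m. (N - m P, restrict m {..<P})"])
  show "(\<lambda>(i, m). m(P := N - i)) \<in> (SIGMA i:{..N}. weak_compositions P i) \<rightarrow> weak_compositions (Suc P) N"
  proof safe
    fix i m assume i: "i \<le> N" and m: "m \<in> weak_compositions P i"
    have "(\<Sum>p<P. (m(P := N - i)) p) = i" using m by (simp add: weak_compositions_def)
    thus "m(P := N - i) \<in> weak_compositions (Suc P) N"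
      using i m by (auto simp: weak_compositions_def PiE_iff extensional_def)
  qed
  show "(\<lambda>m. (N - m P, restrict m {..<P})) \<in> weak_compositions (Suc P) N \<rightarrow> (SIGMA i:{..N}. weak_compositions P i)"
  proof
    fix m assume "m \<in> weak_compositions (Suc P) N"
    hence "(\<Sum>p<Suc P. m p) = N" by (simp add: weak_compositions_def)
    hence "(\<Sum>p<P. m p) = N - m P" by simp
    thus "(N - m P, restrict m {..<P}) \<in> (SIGMA i:{..N}. weak_compositions P i)"
      by (simp add: weak_compositions_def)
  qed
  show "(\<lambda>m. (N - m P, restrict m {..<P})) ((\<lambda>(i, m). m(P := N - i)) x) = x"
    if "x \<in> (SIGMA i:{..N}. weak_compositions P i)" for x
  proof -
    obtain i m where x: "x = (i, m)" by (cases x)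
    have i: "i \<le> N" and m: "m \<in> PiE {..<P} (\<lambda>_. UNIV)"
      using that by (auto simp: x weak_compositions_def)
    have "restrict (m(P := N - i)) {..<P} = m"
    proof
      fix q show "restrict (m(P := N - i)) {..<P} q = m q"
        using m by (cases "q < P") (auto simp: PiE_iff extensional_def)
    qed
    thus ?thesis using x i by simp
  qed
  show "(\<lambda>(i, m). m(P := N - i)) ((\<lambda>m. (N - m P, restrict m {..<P})) m) = m"
    if "m \<in> weak_compositions (Suc P) N" for m
  proof
    have m: "m \<in> PiE {..<Suc P} (\<lambda>_. UNIV)" "m P \<le> N"
      using that by (auto simp: weak_compositions_def)
    fix q show "(\<lambda>(i, m). m(P := N - i)) ((\<lambda>m. (N - m P, restrict m {..<P})) m) q = m q"
      using m by (cases "q < P"; cases "q = P") (auto simp: PiE_iff extensional_def)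
  qed
qed

definition barnes_layer :: "nat \<Rightarrow> (nat \<Rightarrow> nat) \<Rightarrow> (nat \<Rightarrow> complex) \<Rightarrow> nat \<Rightarrow> complex" where
  "barnes_layer P R d N = (\<Sum>m\<in>weak_compositions P N. \<Prod>p<P. (of_nat (m p) + d p) ^ R p)"

lemma barnes_layer_0: "barnes_layer 0 R d N = (if N = 0 then 1 else 0)"
  by (simp add: barnes_layer_def weak_compositions_0)

lemma barnes_layer_Suc:
  "barnes_layer (Suc P) R d N = (\<Sum>i\<le>N. barnes_layer P R d i * (of_nat (N - i) + d P) ^ R P)"
proof -
  have "barnes_layer (Suc P) R d N =
          (\<Sum>x\<in>(SIGMA i:{..N}. weak_compositions P i).
             \<Prod>p<Suc P. (of_nat ((case x of (i, m) \<Rightarrow> m(P := N - i)) p) + d p) ^ R p)"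
    unfolding barnes_layer_def
    by (rule sum.reindex_bij_betw[OF bij_betw_weak_compositions_Suc, symmetric,
               of "\<lambda>m. \<Prod>p<Suc P. (of_nat (m p) + d p) ^ R p"])
  also have "\<dots> = (\<Sum>(i, m)\<in>(SIGMA i:{..N}. weak_compositions P i).
                     (\<Prod>p<P. (of_nat (m p) + d p) ^ R p) * (of_nat (N - i) + d P) ^ R P)"
    by (intro sum.cong refl) (auto intro!: prod.cong)
  also have "\<dots> = (\<Sum>i\<le>N. barnes_layer P R d i * (of_nat (N - i) + d P) ^ R P)"
    by (simp add: sum.Sigma[symmetric] finite_weak_compositions barnes_layer_def sum_distrib_right)
  finally show ?thesis .
qed

lemma poly_seq_barnes_layer:
  assumes "P \<ge> 1"
  shows "poly_seq (barnes_layer P R d)"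
proof -
  have "poly_seq (barnes_layer (Suc Q) R d)" for Q
  proof (induction Q)
    case 0
    have "barnes_layer (Suc 0) R d N = (\<Sum>i\<le>N. if i = 0 then (of_nat (N - i) + d 0) ^ R 0 else 0)"
      for N unfolding barnes_layer_Suc barnes_layer_0 by (intro sum.cong) auto
    hence "barnes_layer (Suc 0) R d N = (of_nat N + d 0) ^ R 0" for N by simp
    thus ?case
      using poly_seq_power[OF poly_seq_add[OF poly_seq_of_nat poly_seq_const]] by (simp add: fun_eq_iff)
  next
    case (Suc Q)
    have "poly_seq (\<lambda>N. \<Sum>i\<le>N. barnes_layer (Suc Q) R d i * (of_nat (N - i) + d (Suc Q)) ^ R (Suc Q))"
      by (intro poly_seq_convolution Suc.IH poly_seq_power poly_seq_add poly_seq_of_nat poly_seq_const)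
    thus ?case by (simp add: barnes_layer_Suc[abs_def] del: sum.atMost_Suc)
  qed
  from this[of "P - 1"] assms show ?thesis by simp
qed

lemma summable_by_weak_compositions:
  fixes \<phi> :: "(nat \<Rightarrow> nat) \<Rightarrow> 'a::banach"
  assumes "summable (\<lambda>N. \<Sum>n\<in>weak_compositions P N. norm (\<phi> n))"
  shows "\<phi> summable_on PiE {..<P} (\<lambda>_. UNIV)"
    and "(\<lambda>N. \<Sum>n\<in>weak_compositions P N. \<phi> n) sums (\<Sum>\<^sub>\<infinity>n\<in>PiE {..<P} (\<lambda>_. UNIV). \<phi> n)"
proof -
  define T where "T = Sigma UNIV (weak_compositions P)"
  have bij: "bij_betw (\<lambda>n. (\<Sum>p<P. n p, n)) (PiE {..<P} (\<lambda>_. UNIV)) T"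
    by (rule bij_betwI[where g = snd]) (auto simp: T_def weak_compositions_def)
  have "(\<lambda>x. norm ((\<lambda>(N, n). \<phi> n) x)) summable_on T"
    unfolding T_def
  proof (subst Infinite_Sum.abs_summable_on_Sigma_iff, intro conjI ballI)
    show "(\<lambda>y. norm ((\<lambda>(N, n). \<phi> n) (N, y))) summable_on weak_compositions P N" for N
      by (rule summable_on_finite[OF finite_weak_compositions])
    have "(\<lambda>N. \<Sum>n\<in>weak_compositions P N. norm (\<phi> n)) summable_on UNIV"
      using assms by (subst summable_on_UNIV_nonneg_real_iff) (auto intro: sum_nonneg)
    thus "(\<lambda>N. norm (\<Sum>\<^sub>\<infinity>y\<in>weak_compositions P N. norm ((\<lambda>(N, n). \<phi> n) (N, y))))
            summable_on UNIV"
      by (simp add: finite_weak_compositions sum_nonneg)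
  qed
  hence sum_T: "(\<lambda>(N, n). \<phi> n) summable_on T" by (rule abs_summable_summable)
  thus "\<phi> summable_on PiE {..<P} (\<lambda>_. UNIV)"
    using summable_on_reindex_bij_betw[OF bij, of "\<lambda>(N, n). \<phi> n"] by simp
  have "(\<Sum>\<^sub>\<infinity>n\<in>PiE {..<P} (\<lambda>_. UNIV). \<phi> n) = (\<Sum>\<^sub>\<infinity>(N, n)\<in>T. \<phi> n)"
    using infsum_reindex_bij_betw[OF bij, of "\<lambda>(N, n). \<phi> n"] by simp
  also have "\<dots> = (\<Sum>\<^sub>\<infinity>N. \<Sum>n\<in>weak_compositions P N. \<phi> n)"
    using infsum_Sigma'_banach[of "\<lambda>N n. \<phi> n" UNIV "weak_compositions P"] sum_T
    by (simp add: T_def finite_weak_compositions)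
  finally show "(\<lambda>N. \<Sum>n\<in>weak_compositions P N. \<phi> n) sums (\<Sum>\<^sub>\<infinity>n\<in>PiE {..<P} (\<lambda>_. UNIV). \<phi> n)"
    using summable_on_Sigma_banach[of "\<lambda>N n. \<phi> n" UNIV "weak_compositions P"] sum_T
    by (simp add: T_def finite_weak_compositions has_sum_imp_sums[OF has_sum_infsum])
qed

lemma norm_prod_shifted_powers_le:
  fixes d :: "nat \<Rightarrow> complex"
  assumes "n \<in> weak_compositions P N"
  shows "norm (\<Prod>p<P. (of_nat (n p) + d p) ^ R p)
           \<le> (real N + (\<Sum>p<P. norm (d p))) ^ (\<Sum>p<P. R p)"
proof -
  have "norm (\<Prod>p<P. (of_nat (n p) + d p) ^ R p) \<le> (\<Prod>p<P. norm ((of_nat (n p) + d p) ^ R p))"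
    by (rule norm_prod_le)
  also have "\<dots> = (\<Prod>p<P. norm (of_nat (n p) + d p) ^ R p)" by (simp add: norm_power)
  also have "\<dots> \<le> (\<Prod>p<P. (real N + (\<Sum>q<P. norm (d q))) ^ R p)"
  proof (intro prod_mono conjI power_mono)
    fix p assume p: "p \<in> {..<P}"
    have "n p \<le> N" using weak_compositions_subset assms p by (auto simp: PiE_iff)
    moreover have "norm (d p) \<le> (\<Sum>q<P. norm (d q))" using p by (intro member_le_sum) auto
    ultimately show "norm (of_nat (n p) + d p) \<le> real N + (\<Sum>q<P. norm (d q))"
      using norm_triangle_ineq[of "of_nat (n p)" "d p"] by simp
  qed auto
  also have "\<dots> = (real N + (\<Sum>p<P. norm (d p))) ^ (\<Sum>p<P. R p)" by (simp add: power_sum)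
  finally show ?thesis .
qed

lemma power_mult_powr_minus:
  fixes z s :: complex
  assumes "z \<noteq> 0"
  shows "z ^ j * z powr (- s) = z powr (- (s - of_nat j))"
proof -
  have "z powr (- (s - of_nat j)) = z powr (of_nat j + - s)" by simp
  also have "\<dots> = z powr (of_nat j) * z powr (- s)" by (rule powr_add)
  also have "\<dots> = z ^ j * z powr (- s)" using assms by (simp add: powr_nat')
  finally show ?thesis by simp
qed

lemma sum_shifted_weak_composition:
  "n \<in> weak_compositions P N \<Longrightarrow> (\<Sum>p<P. of_nat (n p) + d p) = of_nat N + (\<Sum>p<P. d p)"
  by (simp add: weak_compositions_def sum.distrib flip: of_nat_sum)

lemma summable_norm_barnes_unit_layers:
  fixes d :: "nat \<Rightarrow> complex" and s :: complex
  assumes D: "Re (\<Sum>p<P. d p) > 0" and s: "Re s \<ge> real (P + (\<Sum>p<P. R p)) + 2"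
  shows "summable (\<lambda>N. \<Sum>n\<in>weak_compositions P N.
           norm ((\<Prod>p<P. (of_nat (n p) + d p) ^ R p) * (\<Sum>p<P. of_nat (n p) + d p) powr (- s)))"
proof -
  define D where "D = (\<Sum>p<P. d p)"
  define A where "A = (\<Sum>p<P. norm (d p)) + 1"
  define L where "L = P + (\<Sum>p<P. R p)"
  define c where "c = A / min (Re D) 1"
  have A1: "A \<ge> 1" unfolding A_def by (simp add: sum_nonneg)
  have c1: "c \<ge> 1" using A1 D by (simp add: c_def D_def field_simps min_def)
  have zD: "of_nat N + D \<noteq> 0" for N using D by (auto simp: complex_eq_iff D_def)
  have lin: "real N + A \<le> c * norm (of_nat N + D)" for N
  proof -
    have "real N + min (Re D) 1 \<le> norm (of_nat N + D)"
      using complex_Re_le_cmod[of "of_nat N + D"] by simp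
    hence "c * (real N + min (Re D) 1) \<le> c * norm (of_nat N + D)" using c1 by simp
    moreover have "real N \<le> c * real N" using mult_right_mono[OF c1, of "real N"] by simp
    moreover have "c * min (Re D) 1 = A" using D by (simp add: c_def D_def)
    ultimately show ?thesis unfolding distrib_left by linarith
  qed
  have bound: "(\<Sum>n\<in>weak_compositions P N.
          norm ((\<Prod>p<P. (of_nat (n p) + d p) ^ R p) * (\<Sum>p<P. of_nat (n p) + d p) powr (- s)))
        \<le> c ^ L * norm ((of_nat N + D) powr (- (s - of_nat L)))" for N
  proof -
    have "(\<Sum>n\<in>weak_compositions P N.
            norm ((\<Prod>p<P. (of_nat (n p) + d p) ^ R p) * (\<Sum>p<P. of_nat (n p) + d p) powr (- s)))
          \<le> (\<Sum>n\<in>weak_compositions P N. (real N + A) ^ (\<Sum>p<P. R p) * norm ((of_nat N + D) powr (- s)))"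
    proof (rule sum_mono)
      fix n assume n: "n \<in> weak_compositions P N"
      have "norm (\<Prod>p<P. (of_nat (n p) + d p) ^ R p) \<le> (real N + A) ^ (\<Sum>p<P. R p)"
        using norm_prod_shifted_powers_le[OF n, of d R] by (rule order_trans) (auto simp: A_def intro!: power_mono sum_nonneg add_nonneg_nonneg)
      thus "norm ((\<Prod>p<P. (of_nat (n p) + d p) ^ R p) * (\<Sum>p<P. of_nat (n p) + d p) powr (- s))
              \<le> (real N + A) ^ (\<Sum>p<P. R p) * norm ((of_nat N + D) powr (- s))"
        unfolding norm_mult sum_shifted_weak_composition[OF n] D_def by (rule mult_right_mono) simp
    qed
    also have "\<dots> \<le> (real N + A) ^ P * ((real N + A) ^ (\<Sum>p<P. R p) * norm ((of_nat N + D) powr (- s)))"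
    proof -
      have "real (card (weak_compositions P N)) \<le> real ((N + 1) ^ P)"
        using card_weak_compositions_le[of P N] by linarith
      also have "\<dots> \<le> (real N + A) ^ P" using A1 by (simp add: power_mono)
      finally have "real (card (weak_compositions P N)) \<le> (real N + A) ^ P" .
      thus ?thesis using A1 by (simp only: sum_constant of_nat_id) (intro mult_right_mono; simp)
    qed
    also have "\<dots> = (real N + A) ^ L * norm ((of_nat N + D) powr (- s))"
      by (simp add: L_def power_add)
    also have "\<dots> \<le> (c * norm (of_nat N + D)) ^ L * norm ((of_nat N + D) powr (- s))"
      using A1 lin[of N] by (intro mult_right_mono power_mono) simp_all
    also have "\<dots> = c ^ L * norm ((of_nat N + D) powr (- (s - of_nat L)))"
      unfolding power_mult_powr_minus[OF zD, symmetric] by (simp add: power_mult_distrib norm_mult norm_power)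
    finally show ?thesis .
  qed
  have "summable (\<lambda>N. c ^ L * norm ((of_nat N + D) powr (- (s - of_nat L))))"
    by (intro summable_mult summable_norm_shifted_powr) (use D s in \<open>simp_all add: D_def L_def\<close>)
  thus ?thesis
    by (rule summable_comparison_test') (use bound in \<open>simp add: sum_nonneg\<close>)
qed

lemma barnes_unit_series_by_layers:
  fixes d :: "nat \<Rightarrow> complex" and s :: complex
  assumes D: "Re (\<Sum>p<P. d p) > 0" and s: "Re s \<ge> real (P + (\<Sum>p<P. R p)) + 2"
  shows "(\<lambda>n. (\<Prod>p<P. (of_nat (n p) + d p) ^ R p) * (\<Sum>p<P. of_nat (n p) + d p) powr (- s))
           summable_on PiE {..<P} (\<lambda>_. UNIV)"
    and "(\<lambda>N. barnes_layer P R d N * (of_nat N + (\<Sum>p<P. d p)) powr (- s))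
           sums barnes_series P R s d (\<lambda>_. 1)"
proof -
  note summable = summable_norm_barnes_unit_layers[OF D s]
  show "(\<lambda>n. (\<Prod>p<P. (of_nat (n p) + d p) ^ R p) * (\<Sum>p<P. of_nat (n p) + d p) powr (- s))
           summable_on PiE {..<P} (\<lambda>_. UNIV)"
    by (rule summable_by_weak_compositions(1)[OF summable])
  have "(\<Sum>n\<in>weak_compositions P N. (\<Prod>p<P. (of_nat (n p) + d p) ^ R p) * (\<Sum>p<P. of_nat (n p) + d p) powr (- s))
          = barnes_layer P R d N * (of_nat N + (\<Sum>p<P. d p)) powr (- s)" for N
    by (simp add: barnes_layer_def sum_distrib_right sum_shifted_weak_composition cong: sum.cong)
  with summable_by_weak_compositions(2)[OF summable] show
    "(\<lambda>N. barnes_layer P R d N * (of_nat N + (\<Sum>p<P. d p)) powr (- s)) sums barnes_series P R s d (\<lambda>_. 1)"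
    by (simp add: barnes_series_def)
qed

lemma barnes_unit_continuation_exists:
  assumes P: "P \<ge> 1" and d: "\<And>p. p < P \<Longrightarrow> Re (d p) > 0"
  shows "\<exists>f. is_barnes_continuation P R d (\<lambda>_. 1) f"
proof -
  define D where "D = (\<Sum>p<P. d p)"
  have D: "Re D > 0" unfolding D_def Re_sum using P d by (intro sum_pos) (auto simp: lessThan_empty_iff)
  obtain r J where r: "\<And>N. barnes_layer P R d N = (\<Sum>j\<le>J. r j * (of_nat N + D) ^ j)"
    using poly_seq_expand_at[OF poly_seq_barnes_layer[OF P]] by blast
  obtain h where h: "h meromorphic_on UNIV" "\<And>s. 2 < Re s \<Longrightarrow> (\<lambda>n. (of_nat n + D) powr (-s)) sums h s"
    using hurwitz_meromorphic_continuation[OF D] by blast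
  define f where "f s = (\<Sum>j\<le>J. r j * h (s - of_nat j))" for s
  have "f meromorphic_on UNIV" unfolding f_def
    by (intro meromorphic_on_sum meromorphic_on_mult meromorphic_on_const
              meromorphic_on_compose[OF h(1)] analytic_intros) auto
  moreover have "f s = barnes_series P R s d (\<lambda>_. 1)"
    if s: "Re s > real (P + (\<Sum>p<P. R p) + J) + 2" for s
  proof -
    have "(\<lambda>N. barnes_layer P R d N * (of_nat N + D) powr (- s)) sums barnes_series P R s d (\<lambda>_. 1)"
      unfolding D_def by (rule barnes_unit_series_by_layers(2)) (use D s in \<open>simp_all add: D_def\<close>)
    moreover have "(\<lambda>N. barnes_layer P R d N * (of_nat N + D) powr (- s)) sums f s"
    proof -
      have "real J \<le> real (P + (\<Sum>p<P. R p) + J)" by (simp only: of_nat_le_iff)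
      hence "(\<lambda>N. \<Sum>j\<le>J. r j * (of_nat N + D) powr (- (s - of_nat j))) sums f s"
        unfolding f_def using s by (intro sums_sum sums_mult h(2)) auto
      moreover have "of_nat N + D \<noteq> 0" for N using D by (auto simp: complex_eq_iff)
      ultimately show ?thesis
        by (simp add: r sum_distrib_right mult.assoc power_mult_powr_minus)
    qed
    ultimately show ?thesis by (rule sums_unique2[symmetric])
  qed
  ultimately show ?thesis unfolding is_barnes_continuation_def by blast
qed

lemma barnes_zeta_is_continuation:
  assumes "\<exists>f. is_barnes_continuation P R d c f"
  shows "is_barnes_continuation P R d c (\<lambda>s. barnes_zeta P R s d c)"
  using someI_ex[OF assms] by (simp add: barnes_zeta_def[abs_def])

lemma eventually_cosparse_eq_if_eq_on_halfplane:
  assumes f: "f meromorphic_on UNIV" and g: "g meromorphic_on UNIV"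
    and eq: "\<And>s. Re s > \<sigma> \<Longrightarrow> f s = g s"
  shows "\<forall>\<^sub>\<approx>s. f s = g s"
proof -
  have "(\<lambda>s. f s - g s) meromorphic_on UNIV" by (intro meromorphic_intros f g)
  from meromorphic_imp_constant_or_avoid[OF this open_UNIV connected_UNIV, of 0]
  consider "\<forall>\<^sub>\<approx>s. f s - g s = 0" | "\<forall>\<^sub>\<approx>s. f s - g s \<noteq> 0" by blast
  thus ?thesis
  proof cases
    case 1 thus ?thesis by (rule eventually_mono) simp
  next
    case 2
    define s0 where "s0 = complex_of_real (\<sigma> + 1)"
    have "eventually (\<lambda>s. f s - g s \<noteq> 0) (at s0)"
      using 2 by (subst (asm) eventually_cosparse_open_eq) auto
    moreover have "eventually (\<lambda>s. s \<in> {s. \<sigma> < Re s}) (at s0)"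
      by (rule eventually_at_in_open') (auto simp: open_halfspace_Re_gt s0_def)
    ultimately have "eventually (\<lambda>s. False) (at s0)"
      by eventually_elim (use eq in auto)
    thus ?thesis by (simp add: trivial_limit_at)
  qed
qed

lemma barnes_zeta_eq_continuation:
  assumes "is_barnes_continuation P R d c f"
  shows "\<forall>\<^sub>\<approx>s. barnes_zeta P R s d c = f s"
proof -
  have "is_barnes_continuation P R d c (\<lambda>s. barnes_zeta P R s d c)"
    using assms by (intro barnes_zeta_is_continuation) blast
  with assms obtain \<sigma>1 \<sigma>2 where
    "(\<lambda>s. barnes_zeta P R s d c) meromorphic_on UNIV" "f meromorphic_on UNIV"
    "\<And>s. Re s > \<sigma>1 \<Longrightarrow> barnes_zeta P R s d c = barnes_series P R s d c"
    "\<And>s. Re s > \<sigma>2 \<Longrightarrow> f s = barnes_series P R s d c"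
    unfolding is_barnes_continuation_def by blast
  thus ?thesis by (intro eventually_cosparse_eq_if_eq_on_halfplane[of _ _ "max \<sigma>1 \<sigma>2"]) auto
qed

lemma barnes_series_cong:
  assumes "\<And>p. p < P \<Longrightarrow> d p = d' p" "\<And>p. p < P \<Longrightarrow> c p = c' p"
  shows "barnes_series P R s d c = barnes_series P R s d' c'"
  unfolding barnes_series_def using assms by (intro infsum_cong arg_cong2[where f = "\<lambda>x y. x * y powr (-s)"] prod.cong sum.cong) auto

lemma barnes_zeta_cong:
  assumes "\<And>p. p < P \<Longrightarrow> d p = d' p" "\<And>p. p < P \<Longrightarrow> c p = c' p"
  shows "barnes_zeta P R s d c = barnes_zeta P R s d' c'"
proof -
  have "is_barnes_continuation P R d c = is_barnes_continuation P R d' c'"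
    unfolding is_barnes_continuation_def[abs_def] using barnes_series_cong[OF assms] by simp
  thus ?thesis unfolding barnes_zeta_def by simp
qed

section \<open>Rescaling the weights\<close>

lemma bij_betw_mod_div_PiE:
  fixes B :: "nat \<Rightarrow> nat"
  assumes B: "\<And>p. p < P \<Longrightarrow> B p > 0"
  shows "bij_betw (\<lambda>(k, m). \<lambda>p. if p < P then B p * m p + k p else undefined)
           (PiE {..<P} (\<lambda>p. {..<B p}) \<times> PiE {..<P} (\<lambda>_. UNIV)) (PiE {..<P} (\<lambda>_. UNIV))"
proof (rule bij_betwI[where g = "\<lambda>n. (\<lambda>p. if p < P then n p mod B p else undefined,
                                      \<lambda>p. if p < P then n p div B p else undefined)"])
  show "(\<lambda>(k, m). \<lambda>p. if p < P then B p * m p + k p else undefined)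
          \<in> PiE {..<P} (\<lambda>p. {..<B p}) \<times> PiE {..<P} (\<lambda>_. UNIV) \<rightarrow> PiE {..<P} (\<lambda>_. UNIV)"
    by (auto simp: PiE_iff extensional_def)
  show "(\<lambda>n. (\<lambda>p. if p < P then n p mod B p else undefined, \<lambda>p. if p < P then n p div B p else undefined))
          \<in> PiE {..<P} (\<lambda>_. UNIV) \<rightarrow> PiE {..<P} (\<lambda>p. {..<B p}) \<times> PiE {..<P} (\<lambda>_. UNIV)"
    using B by (auto simp: PiE_iff extensional_def)
  show "(\<lambda>n. (\<lambda>p. if p < P then n p mod B p else undefined, \<lambda>p. if p < P then n p div B p else undefined))
          ((\<lambda>(k, m). \<lambda>p. if p < P then B p * m p + k p else undefined) x) = x"
    if "x \<in> PiE {..<P} (\<lambda>p. {..<B p}) \<times> PiE {..<P} (\<lambda>_. UNIV)" for x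
  proof -
    obtain k m where x: "x = (k, m)" by (cases x)
    have k: "k \<in> PiE {..<P} (\<lambda>p. {..<B p})" and m: "m \<in> PiE {..<P} (\<lambda>_. UNIV)"
      using that by (auto simp: x)
    show ?thesis unfolding x using k m B by (auto simp: PiE_iff extensional_def fun_eq_iff)
  qed
  show "(\<lambda>(k, m). \<lambda>p. if p < P then B p * m p + k p else undefined)
          ((\<lambda>n. (\<lambda>p. if p < P then n p mod B p else undefined, \<lambda>p. if p < P then n p div B p else undefined)) n) = n"
    if "n \<in> PiE {..<P} (\<lambda>_. UNIV)" for n
    using that by (auto simp: PiE_iff extensional_def fun_eq_iff)
qed

lemma barnes_term_rescale:
  fixes d :: "nat \<Rightarrow> complex" and v :: "nat \<Rightarrow> real"
  assumes B: "\<And>p. p < P \<Longrightarrow> B p > 0" and w: "w > 0" and v: "\<And>p. p < P \<Longrightarrow> v p * real (B p) = w"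
    and n: "\<And>p. p < P \<Longrightarrow> n p = B p * m p + k p"
  defines "e \<equiv> \<lambda>p. (d p + of_nat (k p)) / of_nat (B p)"
  shows "(\<Prod>p<P. (of_nat (n p) + d p) ^ R p) * (\<Sum>p<P. of_real (v p) * (of_nat (n p) + d p)) powr (- s)
           = of_real w powr (- s) * (\<Prod>p<P. of_nat (B p) ^ R p)
             * ((\<Prod>p<P. (of_nat (m p) + e p) ^ R p) * (\<Sum>p<P. of_nat (m p) + e p) powr (- s))"
proof -
  have scale: "of_nat (n p) + d p = of_nat (B p) * (of_nat (m p) + e p)" if p: "p < P" for p
    using B[OF p] by (simp add: n[OF p] e_def field_simps)
  have "(\<Prod>p<P. (of_nat (n p) + d p) ^ R p) = (\<Prod>p<P. (of_nat (B p) * (of_nat (m p) + e p)) ^ R p)"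
    by (intro prod.cong refl) (simp add: scale)
  also have "\<dots> = (\<Prod>p<P. of_nat (B p) ^ R p) * (\<Prod>p<P. (of_nat (m p) + e p) ^ R p)"
    by (simp add: power_mult_distrib prod.distrib)
  moreover have "(\<Sum>p<P. of_real (v p) * (of_nat (n p) + d p)) = of_real w * (\<Sum>p<P. of_nat (m p) + e p)"
  proof -
    have "of_real (v p) * (of_nat (n p) + d p) = of_real w * (of_nat (m p) + e p)" if p: "p < P" for p
    proof -
      have "(of_real (v p) * of_nat (B p) :: complex) = of_real w"
        using v[OF p] by (metis of_real_mult of_real_of_nat_eq)
      thus ?thesis by (simp add: scale[OF p] mult.assoc[symmetric])
    qed
    thus ?thesis unfolding sum_distrib_left by (intro sum.cong) auto
  qed
  moreover have "(of_real w * (\<Sum>p<P. of_nat (m p) + e p)) powr (- s)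
                   = of_real w powr (- s) * (\<Sum>p<P. of_nat (m p) + e p) powr (- s)"
    by (rule powr_times_real_left) (use w in auto)
  ultimately show ?thesis by (simp add: mult_ac)
qed

lemma barnes_series_rescale:
  fixes d :: "nat \<Rightarrow> complex" and v :: "nat \<Rightarrow> real" and B :: "nat \<Rightarrow> nat"
  assumes P: "P \<ge> 1" and d: "\<And>p. p < P \<Longrightarrow> Re (d p) > 0" and B: "\<And>p. p < P \<Longrightarrow> B p > 0"
    and w: "w > 0" and v: "\<And>p. p < P \<Longrightarrow> v p * real (B p) = w"
    and s: "Re s \<ge> real (P + (\<Sum>p<P. R p)) + 2"
  shows "barnes_series P R s d (\<lambda>p. of_real (v p)) =
           of_real w powr (- s) * (\<Prod>p<P. of_nat (B p) ^ R p) *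
           (\<Sum>k\<in>PiE {..<P} (\<lambda>p. {..<B p}).
              barnes_series P R s (\<lambda>p. (d p + of_nat (k p)) / of_nat (B p)) (\<lambda>_. 1))"
proof -
  define K where "K = PiE {..<P} (\<lambda>p. {..<B p})"
  define M where "M = PiE {..<P} (\<lambda>_::nat. UNIV :: nat set)"
  define e where "e k p = (d p + of_nat (k p)) / of_nat (B p)" for k :: "nat \<Rightarrow> nat" and p
  define \<psi> where "\<psi> k m = (\<Prod>p<P. (of_nat (m p) + e k p) ^ R p) * (\<Sum>p<P. of_nat (m p) + e k p) powr (- s)"
    for k m :: "nat \<Rightarrow> nat"
  define \<phi> where "\<phi> n = (\<Prod>p<P. (of_nat (n p) + d p) ^ R p) *
      (\<Sum>p<P. of_real (v p) * (of_nat (n p) + d p)) powr (- s)" for n :: "nat \<Rightarrow> nat"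
  define C where "C = of_real w powr (- s) * (\<Prod>p<P. of_nat (B p) ^ R p)"
  define hm where "hm = (\<lambda>(k, m). \<lambda>p. if p < P then B p * m p + k p else undefined)"
  have bij: "bij_betw hm (K \<times> M) M"
    unfolding hm_def K_def M_def by (rule bij_betw_mod_div_PiE[OF B])
  have \<phi>_hm: "\<phi> (hm (k, m)) = C * \<psi> k m" for k m
    unfolding \<phi>_def \<psi>_def C_def e_def
    by (rule barnes_term_rescale[OF B w v]) (simp_all add: hm_def)
  have \<psi>_summable: "\<psi> k summable_on M" if k: "k \<in> K" for k
  proof -
    have "Re (e k p) > 0" if p: "p < P" for p
      using d[OF p] B[OF p] by (simp add: e_def Re_divide_of_nat add_pos_nonneg)
    hence "Re (\<Sum>p<P. e k p) > 0"
      unfolding Re_sum using P by (intro sum_pos) (auto simp: lessThan_empty_iff)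
    from barnes_unit_series_by_layers(1)[OF this s] show ?thesis
      unfolding \<psi>_def[abs_def] M_def .
  qed
  have "(\<lambda>(k, m). C * \<psi> k m) summable_on K \<times> M"
  proof (rule abs_summable_summable)
    show "(\<lambda>x. norm ((\<lambda>(k, m). C * \<psi> k m) x)) summable_on K \<times> M"
    proof (subst Infinite_Sum.abs_summable_on_Sigma_iff, intro conjI ballI)
      show "(\<lambda>y. norm ((\<lambda>(k, m). C * \<psi> k m) (k, y))) summable_on M" if "k \<in> K" for k
        using summable_on_cmult_right[OF \<psi>_summable[OF that], of C]
        by (simp add: summable_on_iff_abs_summable_on_complex)
      show "(\<lambda>k. norm (\<Sum>\<^sub>\<infinity>y\<in>M. norm ((\<lambda>(k, m). C * \<psi> k m) (k, y)))) summable_on K"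
        by (rule summable_on_finite) (simp add: K_def finite_PiE)
    qed
  qed
  note summable_KM = this
  have "(\<Sum>\<^sub>\<infinity>n\<in>M. \<phi> n) = (\<Sum>\<^sub>\<infinity>x\<in>K \<times> M. \<phi> (hm x))"
    by (rule infsum_reindex_bij_betw[OF bij, symmetric])
  also have "\<dots> = (\<Sum>\<^sub>\<infinity>(k, m)\<in>K \<times> M. C * \<psi> k m)"
    by (intro infsum_cong) (auto simp: \<phi>_hm)
  also have "\<dots> = (\<Sum>\<^sub>\<infinity>k\<in>K. \<Sum>\<^sub>\<infinity>m\<in>M. C * \<psi> k m)"
    using infsum_Sigma'_banach[OF summable_KM] by simp
  also have "\<dots> = C * (\<Sum>k\<in>K. \<Sum>\<^sub>\<infinity>m\<in>M. \<psi> k m)"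
    by (simp add: K_def finite_PiE infsum_cmult_right' sum_distrib_left)
  finally show ?thesis
    by (simp add: barnes_series_def C_def K_def M_def \<phi>_def \<psi>_def e_def)
qed

lemma ex_halfplane_finite:
  assumes "finite K" "\<And>k. k \<in> K \<Longrightarrow> \<exists>\<sigma>::real. \<forall>s. Re s > \<sigma> \<longrightarrow> Q k s"
  shows "\<exists>\<sigma>::real. \<forall>s. Re s > \<sigma> \<longrightarrow> (\<forall>k\<in>K. Q k s)"
  using assms
proof (induction K rule: finite_induct)
  case (insert x F)
  then obtain \<sigma>1 \<sigma>2 where "\<forall>s. Re s > \<sigma>1 \<longrightarrow> (\<forall>k\<in>F. Q k s)" "\<forall>s. Re s > \<sigma>2 \<longrightarrow> Q x s"
    by blast
  thus ?case by (intro exI[of _ "max \<sigma>1 \<sigma>2"]) auto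
qed auto

lemma barnes_zeta_rescale:
  fixes d :: "nat \<Rightarrow> complex" and v :: "nat \<Rightarrow> real" and B :: "nat \<Rightarrow> nat"
  assumes P: "P \<ge> 1" and d: "\<And>p. p < P \<Longrightarrow> Re (d p) > 0" and B: "\<And>p. p < P \<Longrightarrow> B p > 0"
    and w: "w > 0" and v: "\<And>p. p < P \<Longrightarrow> v p * real (B p) = w"
  shows "\<forall>\<^sub>\<approx>s. barnes_zeta P R s d (\<lambda>p. of_real (v p)) =
           of_real w powr (- s) * (\<Prod>p<P. of_nat (B p) ^ R p) *
           (\<Sum>k\<in>PiE {..<P} (\<lambda>p. {..<B p}).
              barnes_zeta P R s (\<lambda>p. (d p + of_nat (k p)) / of_nat (B p)) (\<lambda>_. 1))"
proof -
  define K where "K = PiE {..<P} (\<lambda>p. {..<B p})"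
  define e where "e k p = (d p + of_nat (k p)) / of_nat (B p)" for k :: "nat \<Rightarrow> nat" and p
  have "is_barnes_continuation P R (e k) (\<lambda>_. 1) (\<lambda>s. barnes_zeta P R s (e k) (\<lambda>_. 1))" for k
  proof (intro barnes_zeta_is_continuation barnes_unit_continuation_exists[OF P])
    show "Re (e k p) > 0" if "p < P" for p
      using d[OF that] B[OF that] by (simp add: e_def Re_divide_of_nat add_pos_nonneg)
  qed
  hence mero: "(\<lambda>s. barnes_zeta P R s (e k) (\<lambda>_. 1)) meromorphic_on UNIV"
    and halfplane: "\<exists>\<sigma>. \<forall>s. Re s > \<sigma> \<longrightarrow> barnes_zeta P R s (e k) (\<lambda>_. 1) = barnes_series P R s (e k) (\<lambda>_. 1)"
    for k unfolding is_barnes_continuation_def by blast+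
  have "finite K" by (simp add: K_def finite_PiE)
  from ex_halfplane_finite[OF this, where Q = "\<lambda>k s. barnes_zeta P R s (e k) (\<lambda>_. 1) =
           barnes_series P R s (e k) (\<lambda>_. 1)"] halfplane obtain \<sigma> where \<sigma>: "\<And>s k. Re s > \<sigma> \<Longrightarrow> k \<in> K \<Longrightarrow>
      barnes_zeta P R s (e k) (\<lambda>_. 1) = barnes_series P R s (e k) (\<lambda>_. 1)"
    by blast
  define F where "F s = of_real w powr (- s) * (\<Prod>p<P. of_nat (B p) ^ R p) *
                          (\<Sum>k\<in>K. barnes_zeta P R s (e k) (\<lambda>_. 1))" for s
  have "F meromorphic_on UNIV"
  proof -
    have "(\<lambda>s. of_real w powr (- s)) analytic_on UNIV"
      using w by (intro analytic_intros) auto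
    thus ?thesis unfolding F_def
      by (intro meromorphic_intros meromorphic_on_sum analytic_on_imp_meromorphic_on mero)
  qed
  moreover have "F s = barnes_series P R s d (\<lambda>p. of_real (v p))"
    if "Re s > max \<sigma> (real (P + (\<Sum>p<P. R p)) + 2)" for s
  proof -
    have "real (P + (\<Sum>p<P. R p)) + 2 < Re s" using that max.strict_boundedE by blast
    hence "barnes_series P R s d (\<lambda>p. of_real (v p)) = of_real w powr (- s) * (\<Prod>p<P. of_nat (B p) ^ R p)
            * (\<Sum>k\<in>K. barnes_series P R s (e k) (\<lambda>_. 1))"
      unfolding K_def e_def by (intro barnes_series_rescale[OF P d B w v] less_imp_le)
    thus ?thesis using that \<sigma>[of s] by (simp add: F_def)
  qed
  ultimately have "is_barnes_continuation P R d (\<lambda>p. of_real (v p)) F"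
    unfolding is_barnes_continuation_def by blast
  from barnes_zeta_eq_continuation[OF this] show ?thesis by (simp add: F_def K_def e_def[abs_def])
qed

lemma Lcm_Gcd_quotient_integral:
  fixes a b :: "nat \<Rightarrow> nat"
  assumes pos: "\<And>q. q < P \<Longrightarrow> a q > 0 \<and> b q > 0" and p: "p < P"
  defines "L \<equiv> Lcm (a ` {..<P})" and "G \<equiv> Gcd (b ` {..<P})"
  shows "real L / real G / (real (a p) / real (b p)) = real ((L div a p) * (b p div G))"
    and "(L div a p) * (b p div G) > 0"
proof -
  have "a p dvd L" unfolding L_def using p by (intro dvd_Lcm) auto
  moreover have "G dvd b p" unfolding G_def using p by (intro Gcd_dvd) auto
  moreover have "L \<noteq> 0" unfolding L_def using pos by (subst Lcm_0_iff_nat) (auto, metis less_irrefl)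
  moreover have "G \<noteq> 0" unfolding G_def using pos p by (subst Gcd_0_iff) force
  moreover have "a p > 0" "b p > 0" using pos[OF p] by auto
  ultimately show "real L / real G / (real (a p) / real (b p)) = real ((L div a p) * (b p div G))"
    and "(L div a p) * (b p div G) > 0"
    by (auto simp: real_of_nat_div field_simps dvd_div_eq_0_iff)
qed

theorem proposition7p4:
  fixes P :: nat and R :: "nat \<Rightarrow> nat" and d :: "nat \<Rightarrow> complex"
    and a b :: "nat \<Rightarrow> nat"
  assumes "P \<ge> 1"
    and "\<And>p. p < P \<Longrightarrow> Re (d p) > 0"
    and "\<And>p. p < P \<Longrightarrow> a p > 0 \<and> b p > 0 \<and> coprime (a p) (b p)"
  defines "wp \<equiv> (\<lambda>p. real (a p) / real (b p))"
    and "w \<equiv> real (Lcm (a ` {..<P})) / real (Gcd (b ` {..<P}))"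
  defines "\<beta> \<equiv> (\<lambda>p. w / wp p)"
  shows "\<forall>\<^sub>\<approx>s. barnes_zeta P R s d (\<lambda>p. complex_of_real (wp p)) =
      complex_of_real w powr (- s) * (\<Prod>p<P. complex_of_real (\<beta> p) ^ R p) *
      (\<Sum>k \<in> PiE {..<P} (\<lambda>p. {k. real k \<le> \<beta> p - 1}).
          barnes_zeta P R s (\<lambda>p. (d p + of_nat (k p)) / complex_of_real (\<beta> p)) (\<lambda>_. 1))"
proof -
  define B where "B p = (Lcm (a ` {..<P}) div a p) * (b p div Gcd (b ` {..<P}))" for p
  have pos: "a p > 0" "b p > 0" if "p < P" for p using assms(3)[OF that] by auto
  have \<beta>: "\<beta> p = real (B p)" and B: "B p > 0" if "p < P" for p
    using Lcm_Gcd_quotient_integral[of P a b p] assms(3) that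
    unfolding \<beta>_def w_def wp_def B_def by auto
  have v: "wp p * real (B p) = w" if "p < P" for p
    using \<beta>[OF that] pos[OF that] by (simp add: \<beta>_def wp_def field_simps)
  have "w = wp 0 * real (B 0)" using v[of 0] assms(1) by simp
  hence "w > 0" using B[of 0] pos[of 0] assms(1) by (simp add: wp_def)
  have "PiE {..<P} (\<lambda>p. {k. real k \<le> \<beta> p - 1}) = PiE {..<P} (\<lambda>p. {..<B p})"
    by (intro PiE_cong) (auto simp: \<beta>)
  moreover have "(\<Prod>p<P. complex_of_real (\<beta> p) ^ R p) = (\<Prod>p<P. of_nat (B p) ^ R p)"
    by (intro prod.cong) (auto simp: \<beta>)
  moreover have "barnes_zeta P R s (\<lambda>p. (d p + of_nat (k p)) / complex_of_real (\<beta> p)) (\<lambda>_. 1)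
                   = barnes_zeta P R s (\<lambda>p. (d p + of_nat (k p)) / of_nat (B p)) (\<lambda>_. 1)" for s k
    by (rule barnes_zeta_cong) (simp_all add: \<beta>)
  ultimately show ?thesis using barnes_zeta_rescale[OF assms(1,2) B \<open>w > 0\<close> v] by simp
qed

end
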